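(* Let $\varphi=\frac{1+\sqrt5}{2}$ and $\varkappa_1=4$. (i) Let $x=[a_1,a_2,\ldots,a_t,\ldots]\in(0,1)$ be irrational and suppose $$\limsup_{t\to\infty}\frac{S^{\varphi}_{2t}(x)}{t}<\varkappa_1 .$$ Then the derivative $g'_{\varphi^{-1}}(x)$ exists and equals $+\infty$. (ii) For every $\delta>0$ there exists an irrational $y=[b_1,\ldots,b_t,\ldots]\in(0,1)$ such that the limit $\lim_{t\to\infty}\frac{S^{\varphi}_{2t}(y)}{t}$ exists, satisfies $$\lim_{t\to\infty}\frac{S^{\varphi}_{2t}(y)}{t}<\varkappa_1+\delta,$$ and $g'_{\varphi^{-1}}(y)=0$.
   Context: For irrational $x\in(0,1)$ write $x=[a_1,a_2,\ldots]=[0;a_1,a_2,\ldots]$ for its regular continued fraction expansion with partial quotients $a_i\ge 1$. Define $S^{\varphi}_t(x)=\sum_{i=1}^t a_i\left(\frac32+\frac12(-1)^i\right)=a_1+2a_2+a_3+2a_4+\cdots$ (the first $t$ terms). For $\lambda\in(0,1)$ the Denjoy–Tichy–Uitz function $g_\lambda:[0,1]\to[0,1]$ is defined by $g_\lambda(0/1)=0$, $g_\lambda(1/1)=1$, and, whenever $g_\lambda$ is already defined at two consecutive Farey fractions $\frac pq<\frac rs$ (with no value yet defined strictly between them), $g_\lambda\!\left(\frac{p+r}{q+s}\right)=(1-\lambda)g_\lambda\!\left(\frac pq\right)+\lambda g_\lambda\!\left(\frac rs\right)$; it is extended to irrationals by continuity. It is continuous and strictly increasing. For $\lambda=\varphi^{-1}$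 one has, for irrational $x$, $g_{\varphi^{-1}}(x)=\sum_{i\ge1}(-1)^{i-1}\varphi^{-(S^{\varphi}_i(x)-1)}$. The derivative $g'(x)$ is the two-sided limit of $(g(x+\delta)-g(x))/\delta$ as $\delta\to0$, allowed to equal $+\infty$. *)

theory Defs
  imports "HOL-Analysis.Analysis"
begin

definition golden :: real where "golden = (1 + sqrt 5) / 2"

definition gauss_map :: "real \<Rightarrow> real" where
  "gauss_map x = 1 / x - of_int \<lfloor>1 / x\<rfloor>"

definition cf_quot :: "real \<Rightarrow> nat \<Rightarrow> nat" where
  "cf_quot x i = nat \<lfloor>1 / ((gauss_map ^^ (i - 1)) x)\<rfloor>"
  \<comment> \<open>the i-th partial quotient a_i, for i \<ge> 1\<close>

definition S_phi :: "nat \<Rightarrow> real \<Rightarrow> real" where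
  "S_phi t x = (\<Sum>i=1..t. real (cf_quot x i) * (3/2 + (1/2) * (-1) ^ i))"

definition farey_nbrs :: "nat \<Rightarrow> nat \<Rightarrow> nat \<Rightarrow> nat \<Rightarrow> bool" where
  "farey_nbrs p q r s \<longleftrightarrow> q > 0 \<and> s > 0 \<and> r \<le> s \<and> r * q = p * s + 1"

text \<open>Denjoy--Tichy--Uitz function g_lambda: the continuous function on [0,1] with
  g(0)=0, g(1)=1 and g((p+r)/(q+s)) = (1-lambda) g(p/q) + lambda g(r/s) for consecutive
  Farey fractions p/q < r/s (every Farey-neighbour pair in [0,1] occurs as a consecutive
  pair in the construction). Outside [0,1] it is set to 0 (irrelevant).\<close>
definition DTU :: "real \<Rightarrow> real \<Rightarrow> real" where
  "DTU lam = (THE g. continuous_on {0..1} g \<and> g 0 = 0 \<and> g 1 = 1 \<and>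
      (\<forall>p q r s. farey_nbrs p q r s \<longrightarrow>
          g (real (p + r) / real (q + s)) = (1 - lam) * g (real p / real q) + lam * g (real r / real s)) \<and>
      (\<forall>x. x \<notin> {0..1} \<longrightarrow> g x = 0))"

end

theory Submission
  imports Defs
begin

text \<open>
  Encode the Stern--Brocot tree by binary words (\<open>True\<close> = right child) and let
  \<open>\<mu> = 1/\<phi>\<close>.  The functional equation of \<open>g = g\<^bsub>1/\<phi>\<^esub>\<close> says that a left child receives
  the fraction \<open>\<mu>\<close> and a right child the fraction \<open>\<mu>\<^sup>2\<close> of the \<open>g\<close>-increment of its
  parent, so the increment of \<open>g\<close> over the Farey interval \<open>[p/q, r/s]\<close> of a word with
  \<open>n\<close> letters, \<open>r\<close> of them right turns, is \<open>\<mu>^(n + r)\<close>, while the interval has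
  length \<open>1/(q s)\<close>.  The path of \<open>x = [a\<^sub>1, a\<^sub>2, \<dots>]\<close> consists of alternating blocks of
  \<open>a\<^sub>i\<close> equal turns, so after \<open>m\<close> blocks the increment is \<open>\<mu>^(S\<^sub>m(x) - 1)\<close> and the
  denominators have grown at least like \<open>\<phi>^m\<close>.  The difference quotients of \<open>g\<close> at \<open>x\<close>
  are comparable to \<open>\<mu>^(n + r) q s\<close> for the Farey interval that \<open>x + h\<close> leaves.

  (i) If \<open>S\<^sub>2\<^sub>t(x) \<le> c t\<close> with \<open>c < 4\<close>, these quotients are at least
  \<open>\<phi>^(2m - c m/2 - O(1)) \<rightarrow> \<infinity>\<close>.

  (ii) For the purely periodic \<open>y = [B, 1, \<dots>, 1, B, 1, \<dots>]\<close> of period \<open>2N + 2\<close>, the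
  upper bound \<open>\<mu>^(n + r) max(q, s)\<^sup>2\<close> for the quotients shrinks by the factor
  \<open>B\<^sup>2 \<phi>^(N + 2) \<mu>^B\<close> per period.  For \<open>N = j\<^sup>2\<close>, \<open>B = j\<^sup>2 + j + 2\<close> and large \<open>j\<close> this
  factor is below 1, so \<open>g'(y) = 0\<close>, while \<open>S\<^sub>2\<^sub>t(y)/t \<rightarrow> (B + 3N + 2)/(N + 1) = 4 + (j - 2)/(j\<^sup>2 + 1)\<close>.
\<close>

section \<open>The golden ratio\<close>

definition mu :: real where "mu = 1 / golden"

lemma golden_sq: "golden^2 = golden + 1"
  unfolding golden_def by (simp add: power2_eq_square field_simps)

lemma golden_gt1: "golden > 1"
proof -
  have "sqrt 5 > 1" by (simp add: real_less_rsqrt)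
  thus ?thesis unfolding golden_def by simp
qed

lemma golden_ge_three_halves: "golden \<ge> 3/2"
proof -
  have "sqrt 5 \<ge> 2" by (simp add: real_le_rsqrt)
  thus ?thesis by (simp add: golden_def)
qed

lemma golden_power_Suc_Suc: "golden ^ Suc (Suc m) = golden ^ Suc m + golden ^ m"
proof -
  have "golden ^ Suc (Suc m) = golden^2 * golden ^ m" by (simp add: power2_eq_square)
  thus ?thesis by (simp add: golden_sq algebra_simps)
qed

lemma mu_pos: "mu > 0" using golden_gt1 by (simp add: mu_def)
lemma mu_lt1: "mu < 1" using golden_gt1 by (simp add: mu_def)
lemma mu_golden: "mu * golden = 1" using golden_gt1 by (simp add: mu_def)
lemma ln_mu: "ln mu = - ln golden" using golden_gt1 by (simp add: mu_def ln_div)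

lemma mu_sq: "mu^2 = 1 - mu"
proof -
  have "mu^2 * (golden + 1) = 1"
    using golden_gt1 by (simp add: mu_def golden_sq[symmetric] power_divide)
  moreover have "golden * mu^2 = mu"
    using mu_golden by (simp add: power2_eq_square mult.commute mult.left_commute)
  ultimately show ?thesis by (simp add: algebra_simps)
qed

lemma mu_plus_sq: "mu + mu^2 = 1" using mu_sq by simp

lemma mu_split: "mu * w + mu^2 * w = w"
  using mu_plus_sq by (metis distrib_right mult_1)

lemma mu_sq_mix: "mu^2 * a + mu * (a + w) = a + mu * w"
  using mu_split[of a] by (simp add: algebra_simps)

lemma one_minus_inv_golden: "1 - 1/golden = mu^2" using mu_sq by (simp add: mu_def)

lemma mu_le_two_thirds: "mu \<le> 2/3"
  using golden_ge_three_halves golden_gt1 by (simp add: mu_def field_simps)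

lemma linear_times_mu_power_le: "(real i + 2) * mu ^ i \<le> 2"
proof (induction i)
  case 0 then show ?case by simp
next
  case (Suc i)
  have "mu * real i \<le> real i" using mult_left_le_one_le[of "real i" mu] mu_pos mu_lt1 by simp
  hence "(real (Suc i) + 2) * mu \<le> real i + 2" using mu_le_two_thirds by (simp add: algebra_simps)
  hence "(real (Suc i) + 2) * mu ^ Suc i \<le> (real i + 2) * mu ^ i"
    using mu_pos by (simp add: mult.assoc[symmetric] mult_right_mono)
  then show ?case using Suc by linarith
qed

section \<open>Stern--Brocot nodes\<close>

type_synonym node = "nat \<times> nat \<times> nat \<times> nat"

definition sb_root :: node where "sb_root = (0,1,1,1)"
fun sb_left :: "node \<Rightarrow> node" where "sb_left (p,q,r,s) = (p,q,p+r,q+s)"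
fun sb_right :: "node \<Rightarrow> node" where "sb_right (p,q,r,s) = (p+r,q+s,r,s)"
definition sb_child :: "bool \<Rightarrow> node \<Rightarrow> node" where "sb_child c n = (if c then sb_right n else sb_left n)"
fun lo :: "node \<Rightarrow> real" where "lo (p,q,r,s) = real p / real q"
fun hi :: "node \<Rightarrow> real" where "hi (p,q,r,s) = real r / real s"
fun mediant :: "node \<Rightarrow> real" where "mediant (p,q,r,s) = real (p + r) / real (q + s)"
fun den_lo :: "node \<Rightarrow> nat" where "den_lo (p,q,r,s) = q"
fun den_hi :: "node \<Rightarrow> nat" where "den_hi (p,q,r,s) = s"
fun sb_valid :: "node \<Rightarrow> bool" where
  "sb_valid (p,q,r,s) \<longleftrightarrow> q > 0 \<and> s > 0 \<and> r \<le> s \<and> r * q = p * s + 1"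

lemma sb_valid_root: "sb_valid sb_root" by (simp add: sb_root_def)

lemma sb_valid_num_less_den:
  assumes "sb_valid (p,q,r,s)" shows "p < q"
proof (rule ccontr)
  assume "\<not> p < q"
  hence "q * s \<le> p * s" by simp
  moreover from assms have "r \<le> s" "r * q = p * s + 1" by auto
  moreover from this(1) have "r * q \<le> s * q" by (rule mult_le_mono1)
  moreover have "s * q = q * s" by (rule mult.commute)
  ultimately show False by linarith
qed

lemma sb_valid_left: "sb_valid n \<Longrightarrow> sb_valid (sb_left n)"
proof (cases n)
  case (fields p q r s)
  moreover assume v: "sb_valid n"
  ultimately have "p < q" using sb_valid_num_less_den by blast
  moreover have "(p + r) * q = p * (q + s) + 1" using v fields by (simp add: algebra_simps)
  ultimately show ?thesis using v fields by simp
qed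

lemma sb_valid_right: "sb_valid n \<Longrightarrow> sb_valid (sb_right n)"
proof (cases n)
  case (fields p q r s)
  moreover assume "sb_valid n"
  moreover from this fields have "r * (q + s) = (p + r) * s + 1" by (simp add: algebra_simps)
  ultimately show ?thesis by simp
qed

lemma sb_valid_child: "sb_valid n \<Longrightarrow> sb_valid (sb_child c n)"
  by (simp add: sb_child_def sb_valid_left sb_valid_right)

lemma sb_valid_real:
  assumes "sb_valid (p,q,r,s)"
  shows "real r * real q = real p * real s + 1" "real q > 0" "real s > 0"
proof -
  have "r * q = p * s + 1" using assms by simp
  hence "real (r * q) = real (p * s + 1)" by simp
  thus "real r * real q = real p * real s + 1" by simp
  show "real q > 0" "real s > 0" using assms by auto
qed

lemma hi_minus_lo:
  assumes "sb_valid n" shows "hi n - lo n = 1 / (real (den_lo n) * real (den_hi n))"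
proof (cases n)
  case (fields p q r s)
  from sb_valid_real[of p q r s] assms fields
  have e: "real r * real q = real p * real s + 1" "real q > 0" "real s > 0" by auto
  have "real r / real s - real p / real q = (real r * real q - real p * real s) / (real q * real s)"
    using e by (simp add: field_simps)
  thus ?thesis using fields e by simp
qed

lemma mediant_minus_lo:
  assumes "sb_valid n" shows "mediant n - lo n = 1 / (real (den_lo n) * (real (den_lo n) + real (den_hi n)))"
proof (cases n)
  case (fields p q r s)
  from sb_valid_real[of p q r s] assms fields
  have e: "real r * real q = real p * real s + 1" "real q > 0" "real s > 0" by auto
  have "(real p + real r) / (real q + real s) - real p / real q
        = ((real p + real r) * real q - real p * (real q + real s)) / (real q * (real q + real s))"
    using e by (simp add: field_simps)
  also have "\<dots> = 1 / (real q * (real q + real s))" using e by (simp add: algebra_simps)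
  finally show ?thesis using fields by simp
qed

lemma hi_minus_mediant:
  assumes "sb_valid n" shows "hi n - mediant n = 1 / ((real (den_lo n) + real (den_hi n)) * real (den_hi n))"
proof (cases n)
  case (fields p q r s)
  from sb_valid_real[of p q r s] assms fields
  have e: "real r * real q = real p * real s + 1" "real q > 0" "real s > 0" by auto
  have "real r / real s - (real p + real r) / (real q + real s)
        = (real r * (real q + real s) - (real p + real r) * real s) / ((real q + real s) * real s)"
    using e by (simp add: field_simps)
  also have "\<dots> = 1 / ((real q + real s) * real s)" using e by (simp add: algebra_simps)
  finally show ?thesis using fields by simp
qed

lemma den_lo_pos: "sb_valid n \<Longrightarrow> den_lo n > 0" by (cases n) auto
lemma den_hi_pos: "sb_valid n \<Longrightarrow> den_hi n > 0" by (cases n) auto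

lemma lo_lt_mediant: "sb_valid n \<Longrightarrow> lo n < mediant n"
proof -
  assume v: "sb_valid n"
  have "1 / (real (den_lo n) * (real (den_lo n) + real (den_hi n))) > 0"
    using den_lo_pos[OF v] den_hi_pos[OF v] by (intro divide_pos_pos) auto
  thus ?thesis using mediant_minus_lo[OF v] by linarith
qed

lemma mediant_lt_hi: "sb_valid n \<Longrightarrow> mediant n < hi n"
proof -
  assume v: "sb_valid n"
  have "1 / ((real (den_lo n) + real (den_hi n)) * real (den_hi n)) > 0"
    using den_lo_pos[OF v] den_hi_pos[OF v] by (intro divide_pos_pos) auto
  thus ?thesis using hi_minus_mediant[OF v] by linarith
qed

lemma lo_lt_hi: "sb_valid n \<Longrightarrow> lo n < hi n"
  using lo_lt_mediant[of n] mediant_lt_hi[of n] by linarith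

lemma lo_sb_left[simp]: "lo (sb_left n) = lo n" by (cases n) auto
lemma hi_sb_left[simp]: "hi (sb_left n) = mediant n" by (cases n) auto
lemma lo_sb_right[simp]: "lo (sb_right n) = mediant n" by (cases n) auto
lemma hi_sb_right[simp]: "hi (sb_right n) = hi n" by (cases n) auto
lemma den_lo_sb_left[simp]: "den_lo (sb_left n) = den_lo n" by (cases n) auto
lemma den_hi_sb_left[simp]: "den_hi (sb_left n) = den_lo n + den_hi n" by (cases n) auto
lemma den_lo_sb_right[simp]: "den_lo (sb_right n) = den_lo n + den_hi n" by (cases n) auto
lemma den_hi_sb_right[simp]: "den_hi (sb_right n) = den_hi n" by (cases n) auto

lemma lo_sb_root[simp]: "lo sb_root = 0" and hi_sb_root[simp]: "hi sb_root = 1"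
  and den_lo_sb_root[simp]: "den_lo sb_root = 1" and den_hi_sb_root[simp]: "den_hi sb_root = 1"
  by (auto simp: sb_root_def)

section \<open>Words and their Farey intervals\<close>

definition node_of :: "bool list \<Rightarrow> node" where
  "node_of W = foldl (\<lambda>n c. sb_child c n) sb_root W"

lemma node_of_Nil[simp]: "node_of [] = sb_root" by (simp add: node_of_def)
lemma node_of_snoc[simp]: "node_of (W @ [c]) = sb_child c (node_of W)" by (simp add: node_of_def)

lemma sb_valid_node_of: "sb_valid (node_of W)"
  by (induction W rule: rev_induct) (auto simp: sb_valid_root sb_valid_child)

text \<open>\<open>offset W\<close> and \<open>offset W + mass W\<close> will turn out to be the values of
  \<open>g\<^bsub>1/\<phi>\<^esub>\<close> at the endpoints of the Farey interval \<open>node_of W\<close>.\<close>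

definition mass_exp :: "bool list \<Rightarrow> nat" where "mass_exp W = length W + length (filter id W)"

definition mass :: "bool list \<Rightarrow> real" where "mass W = mu ^ mass_exp W"

definition offset :: "bool list \<Rightarrow> real" where
  "offset W = (\<Sum>i<length W. if W ! i then mu * mass (take i W) else 0)"

lemma mass_Nil[simp]: "mass [] = 1" by (simp add: mass_def mass_exp_def)
lemma offset_Nil[simp]: "offset [] = 0" by (simp add: offset_def)

lemma mass_snoc[simp]: "mass (W @ [c]) = (if c then mu^2 else mu) * mass W"
  by (simp add: mass_def mass_exp_def power_add[symmetric] power2_eq_square)

lemma offset_snoc[simp]: "offset (W @ [c]) = offset W + (if c then mu * mass W else 0)"
proof -
  have "offset (W @ [c]) = (\<Sum>i<Suc (length W). if (W @ [c]) ! i then mu * mass (take i (W @ [c])) else 0)"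
    by (simp add: offset_def)
  also have "\<dots> = (\<Sum>i<length W. if (W @ [c]) ! i then mu * mass (take i (W @ [c])) else 0)
                 + (if c then mu * mass W else 0)"
    by simp
  also have "(\<Sum>i<length W. if (W @ [c]) ! i then mu * mass (take i (W @ [c])) else 0) = offset W"
    unfolding offset_def by (intro sum.cong) (auto simp: nth_append)
  finally show ?thesis .
qed

lemma mass_pos: "mass W > 0" using mu_pos by (simp add: mass_def)
lemma mass_le_mu_power: "mass W \<le> mu ^ length W"
  using mu_pos mu_lt1 by (simp add: mass_def mass_exp_def power_decreasing)

lemma offset_mass_append:
  "offset V \<le> offset (V @ U) \<and> offset (V @ U) + mass (V @ U) \<le> offset V + mass V"
proof (induction U rule: rev_induct)
  case (snoc c U)
  have "0 \<le> mu * mass (V @ U)" "mu * mass (V @ U) \<le> mass (V @ U)"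
    using mu_pos mu_lt1 mass_pos[of "V @ U"] by simp_all
  with snoc mu_split[of "mass (V @ U)"] show ?case
    by (cases c) (auto simp flip: append_assoc simp: algebra_simps)
qed simp

lemma offset_mass_bounds: "0 \<le> offset W \<and> offset W + mass W \<le> 1"
  using offset_mass_append[of "[]" W] by simp

lemma replicate_Suc_snoc: "replicate (Suc n) x = replicate n x @ [x]"
  by (simp add: replicate_append_same)

lemma node_of_append_lefts:
  "den_lo (node_of (V @ replicate i False)) = den_lo (node_of V) \<and>
   den_hi (node_of (V @ replicate i False)) = den_hi (node_of V) + i * den_lo (node_of V) \<and>
   lo (node_of (V @ replicate i False)) = lo (node_of V) \<and>
   offset (V @ replicate i False) = offset V \<and> mass (V @ replicate i False) = mu ^ i * mass V"
proof (induction i)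
  case (Suc i)
  then show ?case
    unfolding replicate_Suc_snoc append_assoc[symmetric]
    by (simp del: append_assoc replicate.simps add: sb_child_def algebra_simps)
qed simp

lemma node_of_append_rights:
  "den_hi (node_of (V @ replicate i True)) = den_hi (node_of V) \<and>
   den_lo (node_of (V @ replicate i True)) = den_lo (node_of V) + i * den_hi (node_of V) \<and>
   hi (node_of (V @ replicate i True)) = hi (node_of V) \<and>
   offset (V @ replicate i True) + mass (V @ replicate i True) = offset V + mass V \<and>
   mass (V @ replicate i True) = mu ^ (2 * i) * mass V"
proof (induction i)
  case (Suc i)
  then show ?case
    using mu_split[of "mass (V @ replicate i True)"]
    unfolding replicate_Suc_snoc append_assoc[symmetric]
    by (simp del: append_assoc replicate.simps add: sb_child_def algebra_simps power2_eq_square power_mult)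
qed simp

lemma sb_child_subinterval:
  assumes "sb_valid n"
  shows "lo n \<le> lo (sb_child c n) \<and> hi (sb_child c n) \<le> hi n"
  using lo_lt_mediant[OF assms] mediant_lt_hi[OF assms] by (auto simp: sb_child_def)

lemma sb_valid_iff_farey_nbrs: "sb_valid (p,q,r,s) \<longleftrightarrow> farey_nbrs p q r s"
  by (auto simp: farey_nbrs_def)

lemma farey_nbrs_left_parent:
  assumes f: "farey_nbrs p q r s" and qs: "q < s"
  shows "p \<le> r" "farey_nbrs p q (r - p) (s - q)"
proof -
  have h: "q > 0" "s > 0" "r \<le> s" "r * q = p * s + 1" using f by (auto simp: farey_nbrs_def)
  have pq: "p < q" by (rule sb_valid_num_less_den[of p q r s]) (use f in \<open>simp add: farey_nbrs_def\<close>)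
  show rp: "p \<le> r"
  proof (rule ccontr)
    assume "\<not> p \<le> r" hence "r * q < p * q" using h(1) by simp
    moreover have "p * q \<le> p * s" using qs by simp
    ultimately show False using h(4) by linarith
  qed
  have "p * q \<le> p * s" using qs by simp
  have "(r - p) * q = p * s + 1 - p * q" using h(4) by (simp add: diff_mult_distrib)
  also have "\<dots> = p * (s - q) + 1" using \<open>p * q \<le> p * s\<close> by (simp add: diff_mult_distrib2 Suc_diff_le)
  finally have e1: "(r - p) * q = p * (s - q) + 1" .
  have "p \<le> q - 1" using pq by simp
  then have "p * (s - q) + 1 \<le> (q - 1) * (s - q) + 1" by simp
  also have "\<dots> \<le> q * (s - q)" using qs h(1) by (cases q) auto
  finally have "(r - p) * q \<le> (s - q) * q" using e1 by (simp add: mult.commute)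
  then have "r - p \<le> s - q" using h(1) by simp
  with h qs e1 show "farey_nbrs p q (r - p) (s - q)" by (simp add: farey_nbrs_def)
qed

lemma farey_nbrs_right_parent:
  assumes f: "farey_nbrs p q r s" and sq: "s < q"
  shows "r \<le> p" "farey_nbrs (p - r) (q - s) r s"
proof -
  have h: "q > 0" "s > 0" "r \<le> s" "r * q = p * s + 1" using f by (auto simp: farey_nbrs_def)
  show rp: "r \<le> p"
  proof (rule ccontr)
    assume "\<not> r \<le> p" hence "(p + 1) * q \<le> r * q" by (intro mult_le_mono1) simp
    moreover have "p * s \<le> p * q" using sq by simp
    moreover have "(p + 1) * q = p * q + q" by simp
    ultimately show False using h(2,4) sq by linarith
  qed
  then have "r * s \<le> p * s" by simp
  have "r * (q - s) = p * s + 1 - r * s" using h(4) by (simp add: diff_mult_distrib2)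
  also have "\<dots> = (p - r) * s + 1" using \<open>r * s \<le> p * s\<close> by (simp add: diff_mult_distrib Suc_diff_le)
  finally have "r * (q - s) = (p - r) * s + 1" .
  with h sq show "farey_nbrs (p - r) (q - s) r s" by (simp add: farey_nbrs_def)
qed

lemma farey_nbrs_node_of: "farey_nbrs p q r s \<Longrightarrow> \<exists>W. node_of W = (p,q,r,s)"
proof (induction "q + s" arbitrary: p q r s rule: less_induct)
  case less
  have h: "q > 0" "s > 0" "r \<le> s" "r * q = p * s + 1" using less.prems by (auto simp: farey_nbrs_def)
  consider "q < s" | "s < q" | "q = s" by linarith
  then show ?case
  proof cases
    case 1
    with less.hyps obtain W where "node_of W = (p, q, r - p, s - q)"
      using farey_nbrs_left_parent[OF less.prems 1] h by fastforce
    then have "node_of (W @ [False]) = (p, q, r, s)"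
      using farey_nbrs_left_parent(1)[OF less.prems 1] 1 by (simp add: sb_child_def)
    then show ?thesis by blast
  next
    case 2
    with less.hyps obtain W where "node_of W = (p - r, q - s, r, s)"
      using farey_nbrs_right_parent[OF less.prems 2] h by fastforce
    then have "node_of (W @ [True]) = (p, q, r, s)"
      using farey_nbrs_right_parent(1)[OF less.prems 2] 2 by (simp add: sb_child_def)
    then show ?thesis by blast
  next
    case 3
    have pq: "p < q" by (rule sb_valid_num_less_den[of p q r s]) (use less.prems in \<open>simp add: farey_nbrs_def\<close>)
    have "q * (r - p) = 1" using h(4) 3 by (simp add: diff_mult_distrib2 mult.commute)
    then have "q = 1" "r = p + 1" by (auto simp: mult_eq_1_iff)
    then have "node_of [] = (p,q,r,s)" using pq 3 by (simp add: sb_root_def)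
    then show ?thesis by blast
  qed
qed

lemma den_sum_ge_length: "den_lo (node_of W) + den_hi (node_of W) \<ge> length W + 2"
proof (induction W rule: rev_induct)
  case Nil then show ?case by simp
next
  case (snoc c W)
  have "den_lo (node_of W) > 0" "den_hi (node_of W) > 0" using den_lo_pos den_hi_pos sb_valid_node_of by auto
  then show ?case using snoc by (cases c) (auto simp: sb_child_def)
qed

lemma node_width_le: "hi (node_of W) - lo (node_of W) \<le> 1 / (real (length W) + 1)"
proof -
  let ?q = "real (den_lo (node_of W))" and ?s = "real (den_hi (node_of W))"
  have v: "sb_valid (node_of W)" by (rule sb_valid_node_of)
  have q1: "?q \<ge> 1" and s1: "?s \<ge> 1" using den_lo_pos[OF v] den_hi_pos[OF v] by auto
  have "(?q - 1) * (?s - 1) \<ge> 0" using q1 s1 by simp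
  hence "?q * ?s \<ge> ?q + ?s - 1" by (simp add: algebra_simps)
  moreover have "?q + ?s \<ge> real (length W) + 2" using den_sum_ge_length[of W] by linarith
  ultimately have "?q * ?s \<ge> real (length W) + 1" by linarith
  hence "1 / (?q * ?s) \<le> 1 / (real (length W) + 1)"
    by (intro divide_left_mono) auto
  thus ?thesis using hi_minus_lo[OF v] by simp
qed

lemma node_of_in_unit: "0 \<le> lo (node_of W) \<and> hi (node_of W) \<le> 1"
proof (induction W rule: rev_induct)
  case Nil then show ?case by simp
next
  case (snoc c W) then show ?case using sb_child_subinterval[OF sb_valid_node_of[of W], of c] by auto
qed

section \<open>The Stern--Brocot path of a point\<close>

text \<open>\<open>sb_chain True u\<close> follows \<open>u\<close> through half-open intervals \<open>[lo, hi)\<close>,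
  \<open>sb_chain False u\<close> through \<open>(lo, hi]\<close>; they differ only at rational \<open>u\<close>.\<close>

definition goes_right :: "bool \<Rightarrow> real \<Rightarrow> node \<Rightarrow> bool" where
  "goes_right b u n = (if b then mediant n \<le> u else mediant n < u)"

fun sb_chain :: "bool \<Rightarrow> real \<Rightarrow> nat \<Rightarrow> node" where
  "sb_chain b u 0 = sb_root"
| "sb_chain b u (Suc k) = sb_child (goes_right b u (sb_chain b u k)) (sb_chain b u k)"

definition turns_right :: "bool \<Rightarrow> real \<Rightarrow> nat \<Rightarrow> bool" where
  "turns_right b u k = goes_right b u (sb_chain b u k)"

definition sb_word :: "bool \<Rightarrow> real \<Rightarrow> nat \<Rightarrow> bool list" where
  "sb_word b u k = map (turns_right b u) [0..<k]"

lemma sb_word_0[simp]: "sb_word b u 0 = []" by (simp add: sb_word_def)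
lemma sb_word_Suc: "sb_word b u (Suc k) = sb_word b u k @ [turns_right b u k]" by (simp add: sb_word_def)
lemma length_sb_word[simp]: "length (sb_word b u k) = k" by (simp add: sb_word_def)
lemma take_sb_word: "j \<le> k \<Longrightarrow> take j (sb_word b u k) = sb_word b u j"
  by (simp add: sb_word_def take_map)

lemma sb_chain_eq_node_of: "sb_chain b u k = node_of (sb_word b u k)"
  by (induction k) (auto simp: sb_word_Suc turns_right_def)

lemma sb_valid_chain: "sb_valid (sb_chain b u k)"
  by (simp add: sb_chain_eq_node_of sb_valid_node_of)

lemma sb_chain_in_unit: "0 \<le> lo (sb_chain b u k) \<and> hi (sb_chain b u k) \<le> 1"
  using node_of_in_unit[of "sb_word b u k"] by (simp add: sb_chain_eq_node_of)

lemma sb_chain_Suc: "sb_chain b u (Suc k) = sb_child (turns_right b u k) (sb_chain b u k)" by (simp add: turns_right_def)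

declare sb_chain.simps(2)[simp del]

lemma sb_chain_nested: "k \<le> k' \<Longrightarrow> lo (sb_chain b u k) \<le> lo (sb_chain b u k') \<and> hi (sb_chain b u k') \<le> hi (sb_chain b u k)"
proof (induction k' rule: dec_induct)
  case base then show ?case by simp
next
  case (step n)
  have "lo (sb_chain b u n) \<le> lo (sb_chain b u (Suc n)) \<and> hi (sb_chain b u (Suc n)) \<le> hi (sb_chain b u n)"
    using sb_child_subinterval[OF sb_valid_chain[of b u n]] by (simp add: sb_chain_Suc)
  then show ?case using step by auto
qed

lemma sb_chain_den_mono: "k \<le> k' \<Longrightarrow> den_lo (sb_chain b u k) \<le> den_lo (sb_chain b u k') \<and> den_hi (sb_chain b u k) \<le> den_hi (sb_chain b u k')"
proof (induction k' rule: dec_induct)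
  case base then show ?case by simp
next
  case (step n) then show ?case by (auto simp: sb_chain_Suc sb_child_def)
qed

lemma hi_right_run: "k < k' \<Longrightarrow> (\<forall>i. k < i \<and> i < k' \<longrightarrow> turns_right b u i) \<Longrightarrow> hi (sb_chain b u k') = hi (sb_chain b u (Suc k))"
proof (induction k')
  case 0 then show ?case by simp
next
  case (Suc n)
  show ?case
  proof (cases "n = k")
    case True then show ?thesis by simp
  next
    case False
    hence "k < n" using Suc.prems by simp
    hence "hi (sb_chain b u n) = hi (sb_chain b u (Suc k))" "turns_right b u n" using Suc by auto
    then show ?thesis by (simp add: sb_chain_Suc sb_child_def)
  qed
qed

lemma lo_left_run: "k < k' \<Longrightarrow> (\<forall>i. k < i \<and> i < k' \<longrightarrow> \<not> turns_right b u i) \<Longrightarrow> lo (sb_chain b u k') = lo (sb_chain b u (Suc k))"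
proof (induction k')
  case 0 then show ?case by simp
next
  case (Suc n)
  show ?case
  proof (cases "n = k")
    case True then show ?thesis by simp
  next
    case False
    hence "k < n" using Suc.prems by simp
    hence "lo (sb_chain b u n) = lo (sb_chain b u (Suc k))" "\<not> turns_right b u n" using Suc by auto
    then show ?thesis by (simp add: sb_chain_Suc sb_child_def)
  qed
qed

lemma sb_chain_brackets_True:
  assumes "0 \<le> u" "u < 1"
  shows "lo (sb_chain True u k) \<le> u \<and> u < hi (sb_chain True u k)"
proof (induction k)
  case 0 then show ?case using assms by (simp)
next
  case (Suc k) then show ?case by (auto simp: sb_chain.simps sb_child_def goes_right_def)
qed

lemma sb_chain_brackets_False:
  assumes "0 < u" "u \<le> 1"
  shows "lo (sb_chain False u k) < u \<and> u \<le> hi (sb_chain False u k)"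
proof (induction k)
  case 0 then show ?case using assms by (simp)
next
  case (Suc k) then show ?case by (auto simp: sb_chain.simps sb_child_def goes_right_def)
qed

lemma sb_word_node_of:
  "lo (node_of W) \<le> u \<Longrightarrow> u < hi (node_of W) \<Longrightarrow> sb_word True u (length W) = W"
proof (induction W rule: rev_induct)
  case Nil then show ?case by simp
next
  case (snoc c W)
  have v: "sb_valid (node_of W)" by (rule sb_valid_node_of)
  have s: "lo (node_of W) \<le> lo (sb_child c (node_of W)) \<and> hi (sb_child c (node_of W)) \<le> hi (node_of W)"
    by (rule sb_child_subinterval[OF v])
  have IH: "sb_word True u (length W) = W" using snoc s by auto
  have "turns_right True u (length W) = c"
    using snoc.prems IH by (cases c) (auto simp: turns_right_def sb_chain_eq_node_of goes_right_def sb_child_def)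
  thus ?case using IH by (simp add: sb_word_Suc)
qed

section \<open>The function \<open>g\<^bsub>1/\<phi>\<^esub>\<close> as a supremum along the Stern--Brocot path\<close>

definition dtu_sup :: "real \<Rightarrow> real" where
  "dtu_sup u = (SUP k. offset (sb_word True u k))"

lemma bdd_above_offset: "bdd_above (range (\<lambda>k. offset (sb_word b u k)))"
  using offset_mass_bounds mass_pos by (intro bdd_aboveI[of _ 1]) (auto, smt (verit))

lemma offset_le_dtu_sup: "offset (sb_word True u k) \<le> dtu_sup u"
  unfolding dtu_sup_def by (rule cSUP_upper[OF UNIV_I bdd_above_offset])

lemma offset_mass_prefix:
  assumes "j \<le> k"
  shows "offset (sb_word b u j) \<le> offset (sb_word b u k) \<and>
         offset (sb_word b u k) + mass (sb_word b u k) \<le> offset (sb_word b u j) + mass (sb_word b u j)"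
proof -
  have "sb_word b u k = take j (sb_word b u k) @ drop j (sb_word b u k)" by simp
  hence "sb_word b u k = sb_word b u j @ drop j (sb_word b u k)" using take_sb_word[OF assms] by simp
  thus ?thesis using offset_mass_append[of "sb_word b u j" "drop j (sb_word b u k)"] by simp
qed

lemma dtu_sup_bounds:
  assumes "lo (node_of W) \<le> u" "u < hi (node_of W)"
  shows "offset W \<le> dtu_sup u \<and> dtu_sup u \<le> offset W + mass W"
proof -
  have R: "sb_word True u (length W) = W" by (rule sb_word_node_of[OF assms])
  have "offset W \<le> dtu_sup u" using offset_le_dtu_sup[of u "length W"] R by simp
  moreover have "dtu_sup u \<le> offset W + mass W"
    unfolding dtu_sup_def
  proof (rule cSUP_least)
    fix k
    let ?K = "max k (length W)"
    have a: "offset (sb_word True u k) \<le> offset (sb_word True u ?K)" using offset_mass_prefix[of k ?K] by simp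
    have b: "offset (sb_word True u ?K) + mass (sb_word True u ?K) \<le> offset W + mass W"
      using offset_mass_prefix[of "length W" ?K True u] R by simp
    show "offset (sb_word True u k) \<le> offset W + mass W" using a b mass_pos[of "sb_word True u ?K"] by linarith
  qed simp
  ultimately show ?thesis by simp
qed

lemma dtu_sup_lo: "dtu_sup (lo (node_of W)) = offset W"
proof -
  let ?u = "lo (node_of W)"
  have v: "sb_valid (node_of W)" by (rule sb_valid_node_of)
  have b: "offset W \<le> dtu_sup ?u" using dtu_sup_bounds[of W ?u] lo_lt_hi[OF v] by simp
  have "\<forall>j. dtu_sup ?u \<le> offset W + mu ^ j * mass W"
  proof
    fix j
    let ?V = "W @ replicate j False"
    have "sb_valid (node_of ?V)" by (rule sb_valid_node_of)
    hence "lo (node_of ?V) < hi (node_of ?V)" by (rule lo_lt_hi)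
    hence "dtu_sup ?u \<le> offset ?V + mass ?V" using dtu_sup_bounds[of ?V ?u] node_of_append_lefts[of W j] by simp
    thus "dtu_sup ?u \<le> offset W + mu ^ j * mass W" using node_of_append_lefts[of W j] by simp
  qed
  moreover have "(\<lambda>j. offset W + mu ^ j * mass W) \<longlonglongrightarrow> offset W + 0 * mass W"
    using mu_pos mu_lt1 by (intro tendsto_intros LIMSEQ_power_zero) auto
  ultimately have "dtu_sup ?u \<le> offset W" using LIMSEQ_le_const[of _ "offset W" "dtu_sup ?u"] by auto
  thus ?thesis using b by simp
qed

lemma hi_replicate_True: "hi (node_of (replicate k True)) = 1"
  by (induction k) (simp, simp only: replicate_Suc_snoc node_of_snoc, simp add: sb_child_def)

lemma sb_word_one: "sb_word True 1 k = replicate k True"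
proof (induction k)
  case 0 then show ?case by simp
next
  case (Suc k)
  have "hi (sb_chain True 1 k) = 1"
    using Suc by (simp add: sb_chain_eq_node_of hi_replicate_True del: replicate.simps)
  hence "mediant (sb_chain True 1 k) < 1" using mediant_lt_hi[OF sb_valid_chain[of True 1 k]] by simp
  hence "turns_right True 1 k" by (simp add: turns_right_def goes_right_def)
  thus ?case using Suc by (simp add: sb_word_Suc replicate_Suc_snoc del: replicate.simps)
qed

lemma offset_replicate_True: "offset (replicate k True) = 1 - mu ^ (2 * k)"
proof (induction k)
  case 0 then show ?case by simp
next
  case (Suc k)
  have w: "mass (replicate k True) = mu ^ (2 * k)" by (simp add: mass_def mass_exp_def mult_2)
  have "offset (replicate (Suc k) True) = 1 - mu ^ (2 * k) + mu * mu ^ (2 * k)"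
    using Suc w by (simp only: replicate_Suc_snoc offset_snoc) simp
  also have "\<dots> = 1 - mu ^ (2 * k) * (1 - mu)" by (simp add: algebra_simps)
  also have "\<dots> = 1 - mu ^ (2 * Suc k)"
  proof -
    have "mu ^ (2 * Suc k) = mu ^ (2 * k) * mu^2" by (simp add: power_add power2_eq_square)
    thus ?thesis by (simp only: mu_sq)
  qed
  finally show ?case .
qed

lemma dtu_sup_one: "dtu_sup 1 = 1"
proof -
  have up: "dtu_sup 1 \<le> 1" unfolding dtu_sup_def
    using offset_mass_bounds mass_pos by (intro cSUP_least) (auto, smt (verit))
  have "\<forall>k. 1 - mu ^ (2 * k) \<le> dtu_sup 1" using offset_le_dtu_sup[of 1] by (simp add: sb_word_one offset_replicate_True)
  moreover have "(\<lambda>k. 1 - mu ^ (2 * k)) \<longlonglongrightarrow> 1 - 0"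
  proof -
    have m2: "0 < mu^2" "mu^2 < 1" using mu_pos mu_lt1 mu_sq by auto
    have "(\<lambda>k. (mu^2) ^ k) \<longlonglongrightarrow> 0" using m2
      by (intro LIMSEQ_power_zero) simp
    thus ?thesis by (intro tendsto_intros) (simp add: power_mult)
  qed
  ultimately have "1 \<le> dtu_sup 1" using LIMSEQ_le_const2[of _ 1 "dtu_sup 1"] by auto
  thus ?thesis using up by simp
qed

lemma dtu_sup_hi: "dtu_sup (hi (node_of W)) = offset W + mass W"
proof (induction W rule: rev_induct)
  case Nil then show ?case using dtu_sup_one by simp
next
  case (snoc c W)
  show ?case
  proof (cases c)
    case True
    have "offset (W @ [c]) + mass (W @ [c]) = offset W + mass W * (mu + mu^2)"
      using True by (simp add: algebra_simps)
    thus ?thesis using snoc True mu_plus_sq by (simp add: sb_child_def)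
  next
    case False
    have "hi (node_of (W @ [c])) = lo (node_of (W @ [True]))" using False by (simp add: sb_child_def)
    thus ?thesis using dtu_sup_lo[of "W @ [True]"] False by simp
  qed
qed

lemma dtu_sup_bounds':
  assumes "lo (node_of W) < u" "u \<le> hi (node_of W)"
  shows "offset W \<le> dtu_sup u \<and> dtu_sup u \<le> offset W + mass W"
proof (cases "u = hi (node_of W)")
  case True thus ?thesis using dtu_sup_hi[of W] mass_pos[of W] by simp
next
  case False thus ?thesis using dtu_sup_bounds[of W u] assms by simp
qed

lemma sb_word_eq_or_offset_le:
  assumes "u \<le> v"
  shows "sb_word True u k = sb_word True v k \<or>
    offset (sb_word True u k) + mass (sb_word True u k) \<le> offset (sb_word True v k)"
proof (induction k)
  case (Suc k)
  show ?case
  proof (cases "sb_word True u k = sb_word True v k")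
    case eq: True
    then have "sb_chain True u k = sb_chain True v k" by (simp add: sb_chain_eq_node_of)
    then have "turns_right True u k \<Longrightarrow> turns_right True v k"
      using assms by (auto simp: turns_right_def goes_right_def)
    then show ?thesis using eq by (cases "turns_right True u k = turns_right True v k") (auto simp: sb_word_Suc)
  next
    case False
    then have "offset (sb_word True u k) + mass (sb_word True u k) \<le> offset (sb_word True v k)" using Suc by simp
    then show ?thesis using offset_mass_prefix[of k "Suc k" True u] offset_mass_prefix[of k "Suc k" True v] by simp
  qed
qed simp

lemma dtu_sup_mono:
  assumes "u \<le> v" shows "dtu_sup u \<le> dtu_sup v"
  unfolding dtu_sup_def
proof (rule cSUP_least)
  fix k
  have "offset (sb_word True u k) \<le> offset (sb_word True v k)"
    using sb_word_eq_or_offset_le[OF assms, of k] mass_pos[of "sb_word True u k"] by auto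
  also have "\<dots> \<le> dtu_sup v" by (rule offset_le_dtu_sup)
  finally show "offset (sb_word True u k) \<le> (SUP k. offset (sb_word True v k))" by (simp add: dtu_sup_def)
qed simp

lemma dtu_sup_continuous: "continuous_on {0..1} dtu_sup"
  unfolding continuous_on_iff
proof (intro ballI allI impI)
  fix v e :: real
  assume v: "v \<in> {0..1}" and e: "e > 0"
  obtain k where k: "mu ^ k < e" using real_arch_pow_inv[OF e mu_lt1] by blast
  define N1 where "N1 = sb_word True v k"
  define N2 where "N2 = sb_word False v k"
  have w1: "mass N1 < e" using mass_le_mu_power[of N1] k by (simp add: N1_def)
  have w2: "mass N2 < e" using mass_le_mu_power[of N2] k by (simp add: N2_def)
  define d1 where "d1 = (if v < 1 then hi (node_of N1) - v else 1)"
  define d2 where "d2 = (if 0 < v then v - lo (node_of N2) else 1)"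
  have i1: "v < 1 \<Longrightarrow> lo (node_of N1) \<le> v \<and> v < hi (node_of N1)"
    using sb_chain_brackets_True[of v k] v by (simp add: N1_def sb_chain_eq_node_of)
  have i2: "0 < v \<Longrightarrow> lo (node_of N2) < v \<and> v \<le> hi (node_of N2)"
    using sb_chain_brackets_False[of v k] v by (simp add: N2_def sb_chain_eq_node_of)
  have d1p: "d1 > 0" using i1 by (auto simp: d1_def)
  have d2p: "d2 > 0" using i2 by (auto simp: d2_def)
  show "\<exists>d>0. \<forall>x'\<in>{0..1}. dist x' v < d \<longrightarrow> dist (dtu_sup x') (dtu_sup v) < e"
  proof (intro exI[of _ "min d1 d2"] conjI ballI impI)
    show "min d1 d2 > 0" using d1p d2p by simp
    fix x' assume x': "x' \<in> {0..1}" and dx: "dist x' v < min d1 d2"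
    consider "x' = v" | "v < x'" | "x' < v" by linarith
    then show "dist (dtu_sup x') (dtu_sup v) < e"
    proof cases
      case 1 then show ?thesis using e by simp
    next
      case 2
      hence "v < 1" using x' by simp
      hence a: "lo (node_of N1) \<le> v" "v < hi (node_of N1)" and "x' < hi (node_of N1)"
        using i1 dx by (auto simp: d1_def dist_real_def)
      hence "offset N1 \<le> dtu_sup x' \<and> dtu_sup x' \<le> offset N1 + mass N1" "offset N1 \<le> dtu_sup v \<and> dtu_sup v \<le> offset N1 + mass N1"
        using dtu_sup_bounds[of N1 x'] dtu_sup_bounds[of N1 v] 2 by auto
      thus ?thesis using w1 by (auto simp: dist_real_def)
    next
      case 3
      hence "0 < v" using x' by simp
      hence a: "lo (node_of N2) < v" "v \<le> hi (node_of N2)" and "lo (node_of N2) < x'"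
        using i2 dx by (auto simp: d2_def dist_real_def)
      hence "offset N2 \<le> dtu_sup x' \<and> dtu_sup x' \<le> offset N2 + mass N2" "offset N2 \<le> dtu_sup v \<and> dtu_sup v \<le> offset N2 + mass N2"
        using dtu_sup_bounds'[of N2 x'] dtu_sup_bounds'[of N2 v] 3 by auto
      thus ?thesis using w2 by (auto simp: dist_real_def)
    qed
  qed
qed

section \<open>Identification with the Denjoy--Tichy--Uitz function\<close>

definition dtu_gold :: "real \<Rightarrow> real" where
  "dtu_gold x = (if x \<in> {0..1} then dtu_sup x else 0)"

lemma dtu_sup_mediant: "dtu_sup (mediant (node_of W)) = offset W + mu * mass W"
proof -
  have "mediant (node_of W) = lo (node_of (W @ [True]))" by (simp add: sb_child_def)
  thus ?thesis using dtu_sup_lo[of "W @ [True]"] by simp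
qed

definition farey_interpolant :: "real \<Rightarrow> (real \<Rightarrow> real) \<Rightarrow> bool" where
  "farey_interpolant lam g \<longleftrightarrow> continuous_on {0..1} g \<and> g 0 = 0 \<and> g 1 = 1 \<and>
     (\<forall>p q r s. farey_nbrs p q r s \<longrightarrow>
        g (real (p + r) / real (q + s)) = (1 - lam) * g (real p / real q) + lam * g (real r / real s)) \<and>
     (\<forall>x. x \<notin> {0..1} \<longrightarrow> g x = 0)"

lemma farey_interpolant_golden_mediant:
  assumes "farey_interpolant (1 / golden) g"
  shows "g (mediant (node_of W)) = mu^2 * g (lo (node_of W)) + mu * g (hi (node_of W))"
proof -
  obtain p q r s where n: "node_of W = (p,q,r,s)" by (cases "node_of W") auto
  then have "farey_nbrs p q r s" using sb_valid_node_of[of W] sb_valid_iff_farey_nbrs by metis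
  with assms n show ?thesis by (simp add: farey_interpolant_def one_minus_inv_golden mu_def)
qed

lemma farey_interpolant_node_of:
  assumes g: "farey_interpolant (1 / golden) g"
  shows "g (lo (node_of W)) = offset W \<and> g (hi (node_of W)) = offset W + mass W"
proof (induction W rule: rev_induct)
  case Nil then show ?case using g by (simp add: farey_interpolant_def)
next
  case (snoc c W)
  have "g (mediant (node_of W)) = offset W + mu * mass W"
    using farey_interpolant_golden_mediant[OF g, of W] snoc mu_sq_mix by simp
  then show ?case using snoc mu_split[of "mass W"] by (cases c) (auto simp: sb_child_def algebra_simps)
qed

lemma lo_sb_chain_tendsto:
  assumes u: "0 \<le> u" "u < 1"
  shows "(\<lambda>k. lo (sb_chain True u k)) \<longlonglongrightarrow> u"
proof (rule real_tendsto_sandwich[of "\<lambda>k. u - 1 / (real k + 1)" _ _ "\<lambda>k. u"])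
  have "lo (sb_chain True u k) \<le> u \<and> u < hi (sb_chain True u k)" for k
    by (rule sb_chain_brackets_True[OF u])
  moreover have "hi (sb_chain True u k) - lo (sb_chain True u k) \<le> 1 / (real k + 1)" for k
    using node_width_le[of "sb_word True u k"] by (simp add: sb_chain_eq_node_of)
  ultimately have "u - 1 / (real k + 1) \<le> lo (sb_chain True u k)" "lo (sb_chain True u k) \<le> u" for k
    by (smt (verit))+
  then show "\<forall>\<^sub>F k in sequentially. u - 1 / (real k + 1) \<le> lo (sb_chain True u k)"
    "\<forall>\<^sub>F k in sequentially. lo (sb_chain True u k) \<le> u"
    by (auto intro: always_eventually)
  have "(\<lambda>k. 1 / (real k + 1)) \<longlonglongrightarrow> 0"
    using LIMSEQ_inverse_real_of_nat by (simp add: inverse_eq_divide add.commute)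
  from tendsto_diff[OF tendsto_const[of u] this]
  show "(\<lambda>k. u - 1 / (real k + 1)) \<longlonglongrightarrow> u" by simp
qed simp

lemma offset_sb_word_tendsto:
  assumes u: "0 \<le> u" "u < 1"
  shows "(\<lambda>k. offset (sb_word True u k)) \<longlonglongrightarrow> dtu_sup u"
proof (rule real_tendsto_sandwich[of "\<lambda>k. dtu_sup u - mu ^ k" _ _ "\<lambda>k. dtu_sup u"])
  have "dtu_sup u \<le> offset (sb_word True u k) + mass (sb_word True u k)" for k
    using dtu_sup_bounds[of "sb_word True u k" u] sb_chain_brackets_True[OF u, of k]
    by (simp add: sb_chain_eq_node_of)
  moreover have "mass (sb_word True u k) \<le> mu ^ k" for k
    using mass_le_mu_power[of "sb_word True u k"] by simp
  ultimately have "dtu_sup u - mu ^ k \<le> offset (sb_word True u k)" for k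
    by (smt (verit))
  then show "\<forall>\<^sub>F k in sequentially. dtu_sup u - mu ^ k \<le> offset (sb_word True u k)"
    by (auto intro: always_eventually)
  show "\<forall>\<^sub>F k in sequentially. offset (sb_word True u k) \<le> dtu_sup u"
    using offset_le_dtu_sup by auto
  show "(\<lambda>k. dtu_sup u - mu ^ k) \<longlonglongrightarrow> dtu_sup u"
    using mu_pos mu_lt1 by (intro tendsto_eq_intros LIMSEQ_power_zero) auto
qed simp

lemma farey_interpolant_dtu_gold: "farey_interpolant (1 / golden) dtu_gold"
  unfolding farey_interpolant_def
proof (intro conjI allI impI)
  show "continuous_on {0..1} dtu_gold"
    using dtu_sup_continuous by (rule continuous_on_eq) (simp add: dtu_gold_def)
  show "dtu_gold 0 = 0" using dtu_sup_lo[of "[]"] by (simp add: dtu_gold_def)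
  show "dtu_gold 1 = 1" using dtu_sup_one by (simp add: dtu_gold_def)
  show "dtu_gold x = 0" if "x \<notin> {0..1}" for x using that by (auto simp: dtu_gold_def)
next
  fix p q r s assume "farey_nbrs p q r s"
  then obtain W where n: "node_of W = (p,q,r,s)" using farey_nbrs_node_of by blast
  have v: "sb_valid (node_of W)" by (rule sb_valid_node_of)
  have "0 \<le> lo (node_of W)" "hi (node_of W) \<le> 1" using node_of_in_unit[of W] by auto
  moreover have "lo (node_of W) < mediant (node_of W)" "mediant (node_of W) < hi (node_of W)"
    using lo_lt_mediant[OF v] mediant_lt_hi[OF v] by auto
  ultimately have "dtu_gold (mediant (node_of W)) = mu^2 * dtu_gold (lo (node_of W)) + mu * dtu_gold (hi (node_of W))"
    using dtu_sup_mediant[of W] dtu_sup_lo[of W] dtu_sup_hi[of W] mu_sq_mix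
    by (simp add: dtu_gold_def)
  then show "dtu_gold (real (p + r) / real (q + s))
      = (1 - 1 / golden) * dtu_gold (real p / real q) + 1 / golden * dtu_gold (real r / real s)"
    using n by (simp add: one_minus_inv_golden mu_def)
qed

lemma farey_interpolant_golden_unique:
  assumes g: "farey_interpolant (1 / golden) g"
  shows "g = dtu_gold"
proof
  fix u
  show "g u = dtu_gold u"
  proof (cases "0 \<le> u \<and> u < 1")
    case True
    have "lo (sb_chain True u k) \<in> {0..1}" for k
      using sb_chain_in_unit[of True u k] sb_chain_brackets_True[of u k] True by auto
    moreover have "continuous_on {0..1} g" using g by (simp add: farey_interpolant_def)
    ultimately have "(\<lambda>k. g (lo (sb_chain True u k))) \<longlonglongrightarrow> g u"
      using lo_sb_chain_tendsto[of u] True by (intro continuous_on_tendsto_compose[of "{0..1}" g]) auto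
    moreover have "g (lo (sb_chain True u k)) = offset (sb_word True u k)" for k
      using farey_interpolant_node_of[OF g] by (simp add: sb_chain_eq_node_of)
    ultimately have "g u = dtu_sup u" using offset_sb_word_tendsto[of u] True LIMSEQ_unique by auto
    then show ?thesis using True by (simp add: dtu_gold_def)
  next
    case False
    then show ?thesis using g dtu_sup_one by (cases "u = 1") (auto simp: farey_interpolant_def dtu_gold_def)
  qed
qed

lemma DTU_golden_eq: "DTU (1 / golden) = dtu_gold"
proof -
  have "DTU (1 / golden) = (THE g. farey_interpolant (1 / golden) g)"
    by (simp add: DTU_def farey_interpolant_def)
  also have "\<dots> = dtu_gold" using farey_interpolant_dtu_gold farey_interpolant_golden_unique by blast
  finally show ?thesis .
qed

section \<open>Continued fractions and the Stern--Brocot path\<close>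

definition unit_irrat :: "real \<Rightarrow> bool" where "unit_irrat x \<longleftrightarrow> 0 < x \<and> x < 1 \<and> x \<notin> \<rat>"

lemma mediant_Rats: "mediant n \<in> \<rat>" by (cases n) auto
lemma lo_Rats: "lo n \<in> \<rat>" by (cases n) auto

lemma unit_irrat_gauss_map: assumes "unit_irrat x" shows "unit_irrat (gauss_map x)"
proof -
  have x: "0 < x" "x < 1" "x \<notin> \<rat>" using assms by (auto simp: unit_irrat_def)
  have i: "1 / x \<notin> \<rat>"
  proof
    assume "1 / x \<in> \<rat>" hence "1 / (1 / x) \<in> \<rat>" by (rule Rats_divide[OF Rats_1])
    thus False using x by simp
  qed
  have ni: "gauss_map x \<notin> \<rat>"
  proof
    assume "gauss_map x \<in> \<rat>"
    hence "gauss_map x + of_int \<lfloor>1/x\<rfloor> \<in> \<rat>" by (intro Rats_add) auto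
    thus False using i by (simp add: gauss_map_def)
  qed
  have "0 \<le> gauss_map x" "gauss_map x < 1" unfolding gauss_map_def by linarith+
  moreover have "gauss_map x \<noteq> 0" using ni by auto
  ultimately show ?thesis using ni by (simp add: unit_irrat_def)
qed

lemma unit_irrat_funpow_gauss_map: "unit_irrat x \<Longrightarrow> unit_irrat ((gauss_map ^^ i) x)"
  by (induction i) (auto intro: unit_irrat_gauss_map)

lemma cf_quot_Suc_gauss_map: "i \<ge> 1 \<Longrightarrow> cf_quot x (Suc i) = cf_quot (gauss_map x) i"
  unfolding cf_quot_def by (cases i) (auto simp: funpow_Suc_right simp del: funpow.simps)

lemma floor_inverse_ge1: "unit_irrat x \<Longrightarrow> \<lfloor>1 / x\<rfloor> \<ge> 1"
proof -
  assume "unit_irrat x"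
  hence "1 / x > 1" by (auto simp: unit_irrat_def)
  thus ?thesis by linarith
qed

lemma cf_quot_ge1: assumes "unit_irrat x" "i \<ge> 1" shows "cf_quot x i \<ge> 1"
  using floor_inverse_ge1[OF unit_irrat_funpow_gauss_map[OF assms(1), of "i - 1"]] unfolding cf_quot_def by linarith

lemma cf_quot_1: "cf_quot x 1 = nat \<lfloor>1 / x\<rfloor>" by (simp add: cf_quot_def)

lemma cf_quot_1_gauss_map_eq: assumes "unit_irrat x" shows "x = 1 / (real (cf_quot x 1) + gauss_map x)"
proof -
  have f: "\<lfloor>1 / x\<rfloor> \<ge> 0" using floor_inverse_ge1[OF assms] by linarith
  have "real (cf_quot x 1) = of_int \<lfloor>1 / x\<rfloor>" unfolding cf_quot_1 using of_nat_nat[OF f] by simp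
  hence "real (cf_quot x 1) + gauss_map x = 1 / x" by (simp add: gauss_map_def)
  thus ?thesis using assms by (simp add: unit_irrat_def)
qed

lemma cf_quot_1_bounds: assumes "unit_irrat x"
  shows "1 / (real (cf_quot x 1) + 1) < x" "x < 1 / real (cf_quot x 1)"
proof -
  have g: "unit_irrat (gauss_map x)" by (rule unit_irrat_gauss_map[OF assms])
  have a: "real (cf_quot x 1) \<ge> 1" using cf_quot_ge1[OF assms, of 1] by simp
  have e: "x = 1 / (real (cf_quot x 1) + gauss_map x)" by (rule cf_quot_1_gauss_map_eq[OF assms])
  have g0: "0 < gauss_map x" "gauss_map x < 1" using g by (auto simp: unit_irrat_def)
  have x0: "x > 0" using assms by (simp add: unit_irrat_def)
  have p1: "x * gauss_map x > 0" using g0 x0 by simp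
  have p2: "x * gauss_map x < x" using g0 x0 by simp
  have ee: "x * real (cf_quot x 1) + x * gauss_map x = 1"
    using e a g0 by (simp add: field_simps)
  have "1 < x * (real (cf_quot x 1) + 1)" using ee p2 by (simp add: algebra_simps)
  thus "1 / (real (cf_quot x 1) + 1) < x" using a by (simp add: field_simps)
  have "x * real (cf_quot x 1) < 1" using ee p1 by simp
  thus "x < 1 / real (cf_quot x 1)" using a by (simp add: field_simps)
qed

lemma turns_right_iff_mediant_less: assumes "unit_irrat x" shows "turns_right True x k = (mediant (sb_chain True x k) < x)"
proof -
  have "mediant (sb_chain True x k) \<noteq> x" using mediant_Rats[of "sb_chain True x k"] assms by (auto simp: unit_irrat_def)
  thus ?thesis by (auto simp: turns_right_def goes_right_def)
qed

lemma turns_right_first_block_node: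
  assumes "unit_irrat x" "sb_chain True x k = (0,1,1,k+1)" "k + 2 \<le> cf_quot x 1"
  shows "\<not> turns_right True x k"
proof -
  have "x < 1 / real (cf_quot x 1)" by (rule cf_quot_1_bounds(2)[OF assms(1)])
  also have "\<dots> \<le> 1 / (real k + 2)" using assms(3) by (intro divide_left_mono) auto
  finally show ?thesis using assms(2) by (simp add: turns_right_def goes_right_def add.commute)
qed

lemma sb_chain_first_block:
  assumes "unit_irrat x" "k \<le> cf_quot x 1 - 1"
  shows "sb_chain True x k = (0, 1, 1, k + 1)"
  using assms(2)
proof (induction k)
  case 0 then show ?case by (simp add: sb_root_def)
next
  case (Suc k)
  hence "sb_chain True x k = (0,1,1,k+1)" "\<not> turns_right True x k"
    using turns_right_first_block_node[OF assms(1)] by auto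
  thus ?case by (simp add: sb_chain_Suc sb_child_def)
qed

lemma turns_right_first_block:
  assumes "unit_irrat x" "k < cf_quot x 1 - 1" shows "\<not> turns_right True x k"
  using assms turns_right_first_block_node[OF assms(1) sb_chain_first_block[OF assms(1)]] by simp

lemma turns_right_end_first_block: assumes "unit_irrat x" shows "turns_right True x (cf_quot x 1 - 1)"
proof -
  let ?a = "cf_quot x 1"
  have a1: "?a \<ge> 1" using cf_quot_ge1[OF assms, of 1] by simp
  have c: "sb_chain True x (?a - 1) = (0,1,1,?a)" using sb_chain_first_block[OF assms, of "?a - 1"] a1 by simp
  have "1 / (real ?a + 1) < x" by (rule cf_quot_1_bounds(1)[OF assms])
  thus ?thesis using c a1 by (simp add: turns_right_def goes_right_def add.commute)
qed

text \<open>\<open>node_shift a\<close> is the image of a Farey interval under the order-reversing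
  inverse branch \<open>u \<mapsto> 1/(a + u)\<close> of the Gauss map.\<close>

fun node_shift :: "nat \<Rightarrow> node \<Rightarrow> node" where
  "node_shift a (p,q,r,s) = (s, a * s + r, q, a * q + p)"

lemma node_shift_sb_child: "node_shift a (sb_child c n) = sb_child (\<not> c) (node_shift a n)"
  by (cases n) (simp add: sb_child_def algebra_simps)

lemma mediant_node_shift: assumes "sb_valid n" shows "mediant (node_shift a n) = 1 / (real a + mediant n)"
proof (cases n)
  case (fields p q r s)
  have "real q + real s > 0" using assms fields by auto
  thus ?thesis using fields by (simp add: field_simps)
qed

lemma turns_right_node_shift:
  assumes x: "unit_irrat x"
    and eq: "sb_chain True x k = node_shift (cf_quot x 1) (sb_chain True (gauss_map x) j)"
  shows "turns_right True x k = (\<not> turns_right True (gauss_map x) j)"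
proof -
  let ?a = "cf_quot x 1" and ?y = "gauss_map x" and ?N = "sb_chain True (gauss_map x) j"
  have y: "unit_irrat ?y" by (rule unit_irrat_gauss_map[OF x])
  have v: "sb_valid ?N" by (rule sb_valid_chain)
  have "mediant ?N > 0"
    using lo_lt_mediant[OF v] sb_chain_in_unit[of True ?y j] by linarith
  moreover have "?y > 0" using y by (simp add: unit_irrat_def)
  ultimately have "(1 / (real ?a + mediant ?N) < 1 / (real ?a + ?y)) = (?y < mediant ?N)"
    by (simp add: field_simps add_pos_nonneg)
  moreover have "x = 1 / (real ?a + ?y)" by (rule cf_quot_1_gauss_map_eq[OF x])
  ultimately have "turns_right True x k = (?y < mediant ?N)"
    using turns_right_iff_mediant_less[OF x] eq mediant_node_shift[OF v] by simp
  moreover have "mediant ?N \<noteq> ?y" using mediant_Rats[of ?N] y by (auto simp: unit_irrat_def)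
  ultimately show ?thesis using turns_right_iff_mediant_less[OF y, of j] by auto
qed

lemma sb_chain_end_first_block:
  assumes x: "unit_irrat x"
  shows "sb_chain True x (cf_quot x 1) = node_shift (cf_quot x 1) sb_root"
proof -
  let ?a = "cf_quot x 1"
  obtain a' where a': "?a = Suc a'" using cf_quot_ge1[OF x, of 1] by (cases ?a) auto
  have "sb_chain True x a' = (0,1,1,?a)" using sb_chain_first_block[OF x, of a'] a' by simp
  moreover have "turns_right True x a'" using turns_right_end_first_block[OF x] a' by simp
  ultimately show ?thesis using a' by (simp add: sb_chain_Suc sb_child_def sb_root_def)
qed

lemma sb_chain_gauss_map:
  assumes x: "unit_irrat x"
  shows "sb_chain True x (cf_quot x 1 + j) = node_shift (cf_quot x 1) (sb_chain True (gauss_map x) j)"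
proof (induction j)
  case 0 show ?case using sb_chain_end_first_block[OF x] by simp
next
  case (Suc j)
  then show ?case using turns_right_node_shift[OF x Suc]
    by (simp add: sb_chain_Suc node_shift_sb_child)
qed

lemma turns_right_gauss_map:
  "unit_irrat x \<Longrightarrow> turns_right True x (cf_quot x 1 + j) = (\<not> turns_right True (gauss_map x) j)"
  using turns_right_node_shift sb_chain_gauss_map by blast

text \<open>The path of \<open>x = [a\<^sub>1, a\<^sub>2, \<dots>]\<close> starts with \<open>a\<^sub>1 - 1\<close> left turns, followed by
  alternating blocks of \<open>a\<^sub>2\<close> right, \<open>a\<^sub>3\<close> left, \<dots> turns; \<open>block_end x m\<close> is the length of
  the path up to the end of the \<open>m\<close>-th block.\<close>

definition block_end :: "real \<Rightarrow> nat \<Rightarrow> nat" where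
  "block_end x m = (\<Sum>i=1..m. cf_quot x i) - 1"

lemma sum_cf_quot_ge: "unit_irrat x \<Longrightarrow> (\<Sum>i=1..m. cf_quot x i) \<ge> m"
proof (induction m)
  case 0 then show ?case by simp
next
  case (Suc m)
  have "cf_quot x (Suc m) \<ge> 1" using cf_quot_ge1[OF Suc.prems] by simp
  then show ?case using Suc by (simp add: sum.cl_ivl_Suc)
qed

lemma block_end_0[simp]: "block_end x 0 = 0" by (simp add: block_end_def)
lemma block_end_1: "block_end x 1 = cf_quot x 1 - 1" by (simp add: block_end_def)
lemma block_end_Suc_0[simp]: "block_end x (Suc 0) = cf_quot x (Suc 0) - Suc 0" by (simp add: block_end_def)

lemma block_end_Suc: assumes "unit_irrat x" "m \<ge> 1" shows "block_end x (Suc m) = block_end x m + cf_quot x (Suc m)"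
proof -
  have "(\<Sum>i=1..m. cf_quot x i) \<ge> 1" using sum_cf_quot_ge[OF assms(1), of m] assms(2) by simp
  thus ?thesis by (simp add: block_end_def sum.cl_ivl_Suc)
qed

lemma block_end_ge: "unit_irrat x \<Longrightarrow> block_end x m \<ge> m - 1"
  using sum_cf_quot_ge[of x m] by (simp add: block_end_def)

lemma block_end_gauss_map:
  assumes "unit_irrat x" "m \<ge> 2"
  shows "block_end x m = cf_quot x 1 + block_end (gauss_map x) (m - 1)"
proof -
  obtain n where n: "m = Suc (Suc n)" using assms(2) by (cases m; cases "m - 1") auto
  have y: "unit_irrat (gauss_map x)" by (rule unit_irrat_gauss_map[OF assms(1)])
  have "(\<Sum>i=1..m. cf_quot x i) = cf_quot x 1 + (\<Sum>i=Suc 1..Suc (Suc n). cf_quot x i)"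
    using n by (simp add: sum.atLeast_Suc_atMost)
  also have "(\<Sum>i=Suc 1..Suc (Suc n). cf_quot x i) = (\<Sum>i=1..Suc n. cf_quot x (Suc i))"
    by (rule sum.shift_bounds_cl_Suc_ivl)
  also have "\<dots> = (\<Sum>i=1..Suc n. cf_quot (gauss_map x) i)"
    by (intro sum.cong) (auto simp: cf_quot_Suc_gauss_map)
  finally have e: "(\<Sum>i=1..m. cf_quot x i) = cf_quot x 1 + (\<Sum>i=1..Suc n. cf_quot (gauss_map x) i)" .
  have "(\<Sum>i=1..Suc n. cf_quot (gauss_map x) i) \<ge> 1" using sum_cf_quot_ge[OF y, of "Suc n"] by simp
  thus ?thesis using e n by (simp add: block_end_def)
qed

lemma turns_right_block:
  assumes "unit_irrat x" "1 \<le> m" "block_end x (m - 1) \<le> k" "k < block_end x m"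
  shows "turns_right True x k = even m"
  using assms
proof (induction m arbitrary: x k rule: less_induct)
  case (less m)
  let ?a = "cf_quot x 1" and ?y = "gauss_map x"
  have y: "unit_irrat ?y" by (rule unit_irrat_gauss_map[OF less.prems(1)])
  have a1: "?a \<ge> 1" using cf_quot_ge1[OF less.prems(1), of 1] by simp
  consider "m = 1" | "m = 2" | "m \<ge> 3" using less.prems(2) by linarith
  then show ?case
  proof cases
    case 1
    then show ?thesis using turns_right_first_block[OF less.prems(1), of k] less.prems by (simp add: block_end_1)
  next
    case 2
    have p2: "block_end x 2 = ?a + block_end ?y 1" using block_end_gauss_map[OF less.prems(1), of 2] by simp
    have k1: "?a - 1 \<le> k" "k < ?a + block_end ?y 1" using less.prems 2 p2 by (auto simp: block_end_1)
    show ?thesis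
    proof (cases "k = ?a - 1")
      case True thus ?thesis using turns_right_end_first_block[OF less.prems(1)] 2 by simp
    next
      case False
      hence ka: "?a \<le> k" using k1 by linarith
      define j where "j = k - ?a"
      have j: "k = ?a + j" using ka by (simp add: j_def)
      have "j < block_end ?y 1" using k1 j by simp
      hence "\<not> turns_right True ?y j" using less.IH[of 1 ?y j] y 2 by simp
      thus ?thesis using turns_right_gauss_map[OF less.prems(1), of j] j 2 by simp
    qed
  next
    case 3
    have p1: "block_end x (m - 1) = ?a + block_end ?y (m - 2)" using block_end_gauss_map[OF less.prems(1), of "m - 1"] 3
      by (simp add: numeral_2_eq_2)
    have p2: "block_end x m = ?a + block_end ?y (m - 1)" using block_end_gauss_map[OF less.prems(1), of m] 3 by simp
    have ka: "?a \<le> k" using less.prems(3) p1 by linarith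
    define j where "j = k - ?a"
    have j: "k = ?a + j" using ka by (simp add: j_def)
    have mm: "m - 1 - 1 = m - 2" by simp
    have "block_end ?y (m - 1 - 1) \<le> j" "j < block_end ?y (m - 1)" using less.prems(3,4) p1 p2 j unfolding mm
      by linarith+
    hence "turns_right True ?y j = even (m - 1)" using less.IH[of "m - 1" ?y j] y 3 by simp
    hence "turns_right True x k = (\<not> even (m - 1))" using turns_right_gauss_map[OF less.prems(1), of j] j by simp
    thus ?thesis using 3 by simp
  qed
qed

lemma mass_exp_sb_word_Suc: "mass_exp (sb_word b u (Suc k)) = mass_exp (sb_word b u k) + (if turns_right b u k then 2 else 1)"
  by (simp add: mass_exp_def sb_word_Suc)

lemma mass_exp_sb_word_mono: "j \<le> k \<Longrightarrow> mass_exp (sb_word b u j) \<le> mass_exp (sb_word b u k)"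
proof (induction k)
  case 0 then show ?case by simp
next
  case (Suc k) then show ?case by (cases "j = Suc k") (auto simp: mass_exp_sb_word_Suc le_Suc_eq)
qed

lemma mass_exp_first_block: assumes "unit_irrat x" "k \<le> cf_quot x 1 - 1" shows "mass_exp (sb_word True x k) = k"
  using assms(2)
proof (induction k)
  case 0 then show ?case by (simp add: mass_exp_def)
next
  case (Suc k) then show ?case using turns_right_first_block[OF assms(1), of k] by (simp add: mass_exp_sb_word_Suc)
qed

lemma turns_right_within_block:
  assumes "unit_irrat x" "m \<ge> 1" "j < cf_quot x (Suc m)"
  shows "turns_right True x (block_end x m + j) = even (Suc m)"
  using turns_right_block[OF assms(1), of "Suc m" "block_end x m + j"] block_end_Suc[OF assms(1,2)] assms by simp

lemma mass_exp_within_block: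
  assumes "unit_irrat x" "m \<ge> 1" "j \<le> cf_quot x (Suc m)"
  shows "mass_exp (sb_word True x (block_end x m + j)) = mass_exp (sb_word True x (block_end x m)) + j * (if even (Suc m) then 2 else 1)"
  using assms(3)
proof (induction j)
  case 0 then show ?case by simp
next
  case (Suc j)
  have "turns_right True x (block_end x m + j) = even (Suc m)" using turns_right_within_block[OF assms(1,2), of j] Suc by simp
  then show ?case using Suc by (simp add: mass_exp_sb_word_Suc)
qed

lemma S_phi_weight: "(3/2 + 1/2 * (-1::real) ^ n) = (if even n then 2 else 1)"
  by (cases "even n") auto

lemma S_phi_Suc: "S_phi (Suc m) x = S_phi m x + real (cf_quot x (Suc m)) * (if even (Suc m) then 2 else 1)"
  unfolding S_phi_def using S_phi_weight[of "Suc m"] by (simp add: sum.cl_ivl_Suc)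

lemma S_phi_mono: "m \<le> n \<Longrightarrow> S_phi m x \<le> S_phi n x"
proof (induction n)
  case 0 then show ?case by simp
next
  case (Suc n)
  show ?case
  proof (cases "m = Suc n")
    case False
    hence "S_phi m x \<le> S_phi n x" using Suc by simp
    thus ?thesis by (simp add: S_phi_Suc)
  qed simp
qed

lemma mass_exp_block_end: assumes "unit_irrat x" "m \<ge> 1"
  shows "real (mass_exp (sb_word True x (block_end x m))) = S_phi m x - 1"
  using assms(2)
proof (induction m rule: dec_induct)
  case base
  have a1: "cf_quot x 1 \<ge> 1" using cf_quot_ge1[OF assms(1), of 1] by simp
  have "mass_exp (sb_word True x (block_end x 1)) = cf_quot x 1 - 1" using mass_exp_first_block[OF assms(1)] by (simp add: block_end_1)
  moreover have "S_phi 1 x = real (cf_quot x 1)" by (simp add: S_phi_def)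
  ultimately show ?case using a1 by (simp add: of_nat_diff)
next
  case (step m)
  have "mass_exp (sb_word True x (block_end x (Suc m))) = mass_exp (sb_word True x (block_end x m)) + cf_quot x (Suc m) * (if even (Suc m) then 2 else 1)"
    using mass_exp_within_block[OF assms(1) step(1), of "cf_quot x (Suc m)"] block_end_Suc[OF assms(1) step(1)] by simp
  then show ?case using step by (simp add: S_phi_Suc)
qed

lemma dens_within_block:
  assumes "unit_irrat x" "m \<ge> 1" "j \<le> cf_quot x (Suc m)"
  shows "(even (Suc m) \<longrightarrow> den_lo (sb_chain True x (block_end x m + j)) = den_lo (sb_chain True x (block_end x m)) + j * den_hi (sb_chain True x (block_end x m))
                         \<and> den_hi (sb_chain True x (block_end x m + j)) = den_hi (sb_chain True x (block_end x m)))
       \<and> (odd (Suc m) \<longrightarrow> den_hi (sb_chain True x (block_end x m + j)) = den_hi (sb_chain True x (block_end x m)) + j * den_lo (sb_chain True x (block_end x m))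
                         \<and> den_lo (sb_chain True x (block_end x m + j)) = den_lo (sb_chain True x (block_end x m)))"
  using assms(3)
proof (induction j)
  case 0 then show ?case by simp
next
  case (Suc j)
  have "turns_right True x (block_end x m + j) = even (Suc m)" using turns_right_within_block[OF assms(1,2), of j] Suc by simp
  then show ?case using Suc by (auto simp: sb_chain_Suc sb_child_def)
qed

text \<open>At the end of the \<open>m\<close>-th block, \<open>a\<close> is the denominator that grew during that block
  and \<open>b \<le> a\<close> the other one; \<open>a \<ge> \<phi>^(m-1)\<close> and \<open>b \<ge> \<phi>^(m-2)\<close>, as for consecutive
  Fibonacci numbers.\<close>

definition golden_den_growth :: "nat \<Rightarrow> real \<Rightarrow> real \<Rightarrow> bool" where
  "golden_den_growth m a b \<longleftrightarrow> golden ^ m \<le> golden * a \<and> golden ^ m \<le> golden^2 * b \<and> b \<le> a"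

lemma golden_den_growth_Suc:
  assumes I: "golden_den_growth m a b" and c: "1 \<le> c"
  shows "golden_den_growth (Suc m) (b + c * a) a"
proof -
  have g0: "golden > 0" using golden_gt1 by simp
  from I have I: "golden ^ m \<le> golden * a" "golden ^ m \<le> golden^2 * b" "b \<le> a"
    by (auto simp: golden_den_growth_def)
  have "0 < golden ^ m" using g0 by simp
  then have "0 < golden^2 * b" using I(2) by linarith
  then have b: "0 \<le> b" using g0 by (simp add: zero_less_mult_iff)
  have "a \<le> c * a" using c I(3) b mult_right_mono[OF c, of a] by simp
  have A: "golden ^ Suc m \<le> golden^2 * a" using I(1) g0 by (simp add: power2_eq_square mult.assoc)
  have "golden ^ Suc (Suc m) \<le> golden^2 * a + golden^2 * b"
    using golden_power_Suc_Suc[of m] A I(2) by linarith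
  also have "\<dots> \<le> golden^2 * (b + c * a)"
    using mult_left_mono[OF \<open>a \<le> c * a\<close>, of "golden^2"] by (simp add: distrib_left)
  finally have "golden ^ Suc m \<le> golden * (b + c * a)" using g0 by (simp add: power2_eq_square mult.assoc)
  with A b \<open>a \<le> c * a\<close> show ?thesis by (simp add: golden_den_growth_def)
qed

lemma golden_den_growth_block_end:
  assumes x: "unit_irrat x" and m: "m \<ge> 1"
  shows "if even m
         then golden_den_growth m (real (den_lo (sb_chain True x (block_end x m)))) (real (den_hi (sb_chain True x (block_end x m))))
         else golden_den_growth m (real (den_hi (sb_chain True x (block_end x m)))) (real (den_lo (sb_chain True x (block_end x m))))"
  using m
proof (induction m rule: dec_induct)
  case base
  have a1: "cf_quot x 1 \<ge> 1" using cf_quot_ge1[OF x, of 1] by simp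
  have "sb_chain True x (block_end x 1) = (0,1,1,cf_quot x 1)"
    using sb_chain_first_block[OF x, of "cf_quot x 1 - 1"] a1 by (simp add: block_end_1)
  moreover have "golden \<le> golden^2" using golden_gt1 by (simp add: power2_eq_square)
  ultimately show ?case using a1 golden_gt1 by (simp add: golden_den_growth_def)
next
  case (step m)
  let ?b = "cf_quot x (Suc m)"
  have "real ?b \<ge> 1" using cf_quot_ge1[OF x, of "Suc m"] by simp
  moreover note dens_within_block[OF x step(1), of ?b, simplified] block_end_Suc[OF x step(1)]
  ultimately show ?case using step(3) golden_den_growth_Suc by (cases "even m") (auto simp: add.commute)
qed

lemma sb_chain_strict: assumes "unit_irrat x" shows "lo (sb_chain True x k) < x \<and> x < hi (sb_chain True x k)"
proof -
  have "lo (sb_chain True x k) \<le> x \<and> x < hi (sb_chain True x k)" using sb_chain_brackets_True[of x k] assms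
    by (auto simp: unit_irrat_def)
  moreover have "lo (sb_chain True x k) \<noteq> x" using lo_Rats[of "sb_chain True x k"] assms by (auto simp: unit_irrat_def)
  ultimately show ?thesis by auto
qed

lemma block_end_less_Suc: "unit_irrat x \<Longrightarrow> m \<ge> 1 \<Longrightarrow> block_end x m < block_end x (Suc m)"
  using block_end_Suc[of x m] cf_quot_ge1[of x "Suc m"] by simp

lemma block_end_mono: assumes "unit_irrat x" "m \<le> n" shows "block_end x m \<le> block_end x n"
  using assms(2)
proof (induction n rule: dec_induct)
  case (step n)
  then show ?case using block_end_less_Suc[OF assms(1), of n] by (cases "n = 0") auto
qed simp

lemma block_index_gt:
  "unit_irrat x \<Longrightarrow> block_end x m' \<le> k \<Longrightarrow> k < block_end x m \<Longrightarrow> m' < m"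
  using block_end_mono[of x m m'] by (cases "m' < m") auto

lemma block_containing: assumes "unit_irrat x" shows "\<exists>m\<ge>1. block_end x (m - 1) \<le> k \<and> k < block_end x m"
proof -
  have exists_bound: "\<exists>m. k < block_end x m" using block_end_ge[OF assms, of "k + 2"] by (intro exI[of _ "k+2"]) simp
  define m where "m = (LEAST m. k < block_end x m)"
  have m: "k < block_end x m" unfolding m_def by (rule LeastI_ex[OF exists_bound])
  have m1: "m \<ge> 1" using m by (cases m) auto
  have "\<not> k < block_end x (m - 1)" unfolding m_def using m1 not_less_Least[of "m - 1" "\<lambda>m. k < block_end x m"]
    by (simp add: m_def)
  thus ?thesis using m m1 by auto
qed

lemma same_turn_before_next_block_end:
  assumes x: "unit_irrat x" and blk: "m \<ge> 1" "block_end x (m - 1) \<le> k" "k < block_end x m"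
  shows "\<exists>w. k < w \<and> w \<le> block_end x (Suc m) \<and> turns_right True x w = turns_right True x k"
proof (cases "Suc k < block_end x m")
  case True
  have "turns_right True x (Suc k) = turns_right True x k"
    using turns_right_block[OF x blk] turns_right_block[OF x blk(1), of "Suc k"] True blk by simp
  moreover have "Suc k \<le> block_end x (Suc m)" using True block_end_less_Suc[OF x blk(1)] by simp
  ultimately show ?thesis by blast
next
  case False
  let ?w = "block_end x (Suc m)"
  have "turns_right True x ?w = even (Suc (Suc m))"
    using turns_right_block[OF x, of "Suc (Suc m)" ?w] block_end_less_Suc[OF x, of "Suc m"] by simp
  moreover have "k < ?w" using blk(3) block_end_less_Suc[OF x blk(1)] by simp
  ultimately show ?thesis using turns_right_block[OF x blk] by (intro exI[of _ ?w]) auto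
qed

definition next_same_turn :: "real \<Rightarrow> nat \<Rightarrow> nat" where
  "next_same_turn x k = (LEAST j. k < j \<and> turns_right True x j = turns_right True x k)"

lemma next_same_turn_props:
  assumes x: "unit_irrat x"
  shows "k < next_same_turn x k" "turns_right True x (next_same_turn x k) = turns_right True x k"
    and "\<And>i. k < i \<Longrightarrow> i < next_same_turn x k \<Longrightarrow> turns_right True x i \<noteq> turns_right True x k"
proof -
  obtain m where "m \<ge> 1" "block_end x (m - 1) \<le> k" "k < block_end x m" using block_containing[OF x] by blast
  then have "\<exists>j. k < j \<and> turns_right True x j = turns_right True x k"
    using same_turn_before_next_block_end[OF x] by blast
  from LeastI_ex[OF this]
  show "k < next_same_turn x k" "turns_right True x (next_same_turn x k) = turns_right True x k"
    unfolding next_same_turn_def by auto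
  show "\<And>i. k < i \<Longrightarrow> i < next_same_turn x k \<Longrightarrow> turns_right True x i \<noteq> turns_right True x k"
    unfolding next_same_turn_def using not_less_Least by blast
qed

lemma next_same_turn_le_block_end:
  assumes x: "unit_irrat x" and blk: "m \<ge> 1" "block_end x (m - 1) \<le> k" "k < block_end x m"
  shows "next_same_turn x k \<le> block_end x (Suc m)"
proof -
  obtain w where "k < w" "w \<le> block_end x (Suc m)" "turns_right True x w = turns_right True x k"
    using same_turn_before_next_block_end[OF x blk] by blast
  then have "next_same_turn x k \<le> w" unfolding next_same_turn_def by (intro Least_le) simp
  with \<open>w \<le> block_end x (Suc m)\<close> show ?thesis by simp
qed

section \<open>Difference quotients of \<open>g\<^bsub>1/\<phi>\<^esub>\<close>\<close>

lemma nat_crossing: "P K \<Longrightarrow> \<not> P J \<Longrightarrow> K \<le> J \<Longrightarrow> \<exists>k. K \<le> k \<and> k < J \<and> P k \<and> \<not> P (Suc k)"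
proof (induction J)
  case 0 then show ?case by simp
next
  case (Suc J)
  then have "K \<le> J" by (cases "K = Suc J") auto
  with Suc show ?case by (cases "P J") (auto intro: le_less_trans)
qed

definition sb_exit :: "real \<Rightarrow> real \<Rightarrow> nat \<Rightarrow> bool" where
  "sb_exit x h k \<longleftrightarrow>
     (if 0 < h then x + h \<le> hi (sb_chain True x k) \<and> hi (sb_chain True x (Suc k)) < x + h
      else lo (sb_chain True x k) \<le> x + h \<and> x + h < lo (sb_chain True x (Suc k)))"

lemma eventually_sb_exit:
  assumes x: "unit_irrat x"
  shows "\<forall>\<^sub>F h in at 0. h \<noteq> 0 \<and> (\<exists>k\<ge>K. sb_exit x h k)"
proof -
  define d where "d = min (hi (sb_chain True x K) - x) (x - lo (sb_chain True x K))"
  have "d > 0" using sb_chain_strict[OF x, of K] by (simp add: d_def)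
  moreover have "\<exists>k\<ge>K. sb_exit x h k" if h: "h \<noteq> 0" "\<bar>h\<bar> < d" for h
  proof -
    obtain n where n: "n \<noteq> 0" "inverse (real n) < \<bar>h\<bar>" using real_arch_inverse[of "\<bar>h\<bar>"] h by auto
    let ?J = "max n K"
    have "lo (sb_chain True x n) \<le> lo (sb_chain True x ?J) \<and> hi (sb_chain True x ?J) \<le> hi (sb_chain True x n)"
      by (rule sb_chain_nested) simp
    then have "hi (sb_chain True x ?J) - lo (sb_chain True x ?J) \<le> hi (sb_chain True x n) - lo (sb_chain True x n)"
      by linarith
    also have "\<dots> \<le> 1 / (real n + 1)"
      using node_width_le[of "sb_word True x n"] by (simp add: sb_chain_eq_node_of)
    also have "\<dots> < \<bar>h\<bar>" using n by (simp add: field_simps)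
    finally have narrow: "hi (sb_chain True x ?J) - lo (sb_chain True x ?J) < \<bar>h\<bar>" .
    have J: "lo (sb_chain True x ?J) < x" "x < hi (sb_chain True x ?J)" using sb_chain_strict[OF x] by auto
    show ?thesis
    proof (cases "0 < h")
      case True
      let ?P = "\<lambda>j. x + h \<le> hi (sb_chain True x j)"
      have "?P K" "\<not> ?P ?J" "K \<le> ?J" using h True narrow J by (auto simp: d_def)
      then obtain k where "K \<le> k" "?P k" "\<not> ?P (Suc k)" using nat_crossing[of ?P K ?J] by blast
      then show ?thesis using True by (auto simp: sb_exit_def)
    next
      case False
      let ?P = "\<lambda>j. lo (sb_chain True x j) \<le> x + h"
      have "?P K" "\<not> ?P ?J" "K \<le> ?J" using h False narrow J by (auto simp: d_def)
      then obtain k where "K \<le> k" "?P k" "\<not> ?P (Suc k)" using nat_crossing[of ?P K ?J] by blast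
      then show ?thesis using False by (auto simp: sb_exit_def)
    qed
  qed
  ultimately show ?thesis unfolding eventually_at by (auto simp: dist_real_def)
qed

lemma sb_exit_in_unit:
  assumes x: "unit_irrat x" and exit: "sb_exit x h k"
  shows "0 \<le> x + h" "x + h \<le> 1"
  using exit sb_chain_in_unit[of True x k] x by (auto simp: sb_exit_def unit_irrat_def split: if_splits)

lemma sb_exit_width:
  assumes x: "unit_irrat x" and exit: "sb_exit x h k"
  shows "\<bar>h\<bar> * (real (den_lo (sb_chain True x k)) * real (den_hi (sb_chain True x k))) \<le> 1"
proof -
  let ?N = "sb_chain True x k"
  have v: "sb_valid ?N" by (rule sb_valid_chain)
  have "\<bar>h\<bar> < hi ?N - lo ?N" using exit sb_chain_strict[OF x, of k] by (auto simp: sb_exit_def split: if_splits)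
  also have "\<dots> = 1 / (real (den_lo ?N) * real (den_hi ?N))" by (rule hi_minus_lo[OF v])
  finally show ?thesis using den_lo_pos[OF v] den_hi_pos[OF v] by (simp add: field_simps)
qed

lemma dtu_gold_sb_exit:
  assumes x: "unit_irrat x" and exit: "sb_exit x h k"
  shows "dtu_gold (x + h) - dtu_gold x = dtu_sup (x + h) - dtu_sup x"
  using sb_exit_in_unit[OF x exit] x by (auto simp: dtu_gold_def unit_irrat_def)

lemma diff_quot_nonneg:
  assumes x: "unit_irrat x" and exit: "sb_exit x h k"
  shows "(dtu_gold (x + h) - dtu_gold x) / h \<ge> 0"
proof (cases "0 < h")
  case True
  then show ?thesis using dtu_gold_sb_exit[OF x exit] dtu_sup_mono[of x "x + h"] by simp
next
  case False
  then show ?thesis using dtu_gold_sb_exit[OF x exit] dtu_sup_mono[of "x + h" x]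
    by (simp add: divide_nonpos_nonpos)
qed

lemma sb_exit_right:
  assumes x: "unit_irrat x" and h: "0 < h" and exit: "sb_exit x h k"
  shows "mediant (sb_chain True x k) < x + h" "x + h \<le> hi (sb_chain True x k)"
    and "\<not> turns_right True x (next_same_turn x k)"
    and "hi (sb_chain True x (next_same_turn x k)) = mediant (sb_chain True x k)"
    and "x < mediant (sb_chain True x (next_same_turn x k))"
proof -
  let ?N = "sb_chain True x k" and ?k' = "next_same_turn x k"
  from exit h have out: "hi (sb_chain True x (Suc k)) < x + h" and "x + h \<le> hi ?N"
    by (auto simp: sb_exit_def)
  then show "x + h \<le> hi ?N" by simp
  from out \<open>x + h \<le> hi ?N\<close> have k: "\<not> turns_right True x k"
    by (cases "turns_right True x k") (auto simp: sb_chain_Suc sb_child_def)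
  then have "hi (sb_chain True x (Suc k)) = mediant ?N" by (simp add: sb_chain_Suc sb_child_def)
  with out show "mediant ?N < x + h" by simp
  show k': "\<not> turns_right True x ?k'" using next_same_turn_props(2)[OF x, of k] k by simp
  have "\<forall>i. k < i \<and> i < ?k' \<longrightarrow> turns_right True x i" using next_same_turn_props(3)[OF x, of k] k by auto
  with next_same_turn_props(1)[OF x, of k] \<open>hi (sb_chain True x (Suc k)) = mediant ?N\<close>
  show "hi (sb_chain True x ?k') = mediant ?N" using hi_right_run by simp
  have "x < hi (sb_chain True x (Suc ?k'))" using sb_chain_strict[OF x] by blast
  with k' show "x < mediant (sb_chain True x ?k')" by (simp add: sb_chain_Suc sb_child_def)
qed

lemma sb_exit_left:
  assumes x: "unit_irrat x" and h: "h < 0" and exit: "sb_exit x h k"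
  shows "x + h < mediant (sb_chain True x k)" "lo (sb_chain True x k) \<le> x + h"
    and "turns_right True x (next_same_turn x k)"
    and "lo (sb_chain True x (next_same_turn x k)) = mediant (sb_chain True x k)"
    and "mediant (sb_chain True x (next_same_turn x k)) < x"
proof -
  let ?N = "sb_chain True x k" and ?k' = "next_same_turn x k"
  from exit h have out: "x + h < lo (sb_chain True x (Suc k))" and "lo ?N \<le> x + h"
    by (auto simp: sb_exit_def)
  then show "lo ?N \<le> x + h" by simp
  from out \<open>lo ?N \<le> x + h\<close> have k: "turns_right True x k"
    by (cases "turns_right True x k") (auto simp: sb_chain_Suc sb_child_def)
  then have "lo (sb_chain True x (Suc k)) = mediant ?N" by (simp add: sb_chain_Suc sb_child_def)
  with out show "x + h < mediant ?N" by simp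
  show k': "turns_right True x ?k'" using next_same_turn_props(2)[OF x, of k] k by simp
  have "\<forall>i. k < i \<and> i < ?k' \<longrightarrow> \<not> turns_right True x i" using next_same_turn_props(3)[OF x, of k] k by auto
  with next_same_turn_props(1)[OF x, of k] \<open>lo (sb_chain True x (Suc k)) = mediant ?N\<close>
  show "lo (sb_chain True x ?k') = mediant ?N" using lo_left_run by simp
  have "lo (sb_chain True x (Suc ?k')) < x" using sb_chain_strict[OF x] by blast
  with k' show "mediant (sb_chain True x ?k') < x" by (simp add: sb_chain_Suc sb_child_def)
qed

lemma dtu_sup_increment_lower_right:
  assumes x: "unit_irrat x" and h: "0 < h" and exit: "sb_exit x h k"
  shows "mu^2 * mass (sb_word True x (next_same_turn x k)) \<le> dtu_sup (x + h) - dtu_sup x"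
proof -
  let ?W = "sb_word True x (next_same_turn x k) @ [True]"
  note geo = sb_exit_right[OF x h exit]
  have "x < lo (node_of ?W)" "hi (node_of ?W) < x + h"
    using geo by (simp_all add: sb_child_def sb_chain_eq_node_of)
  then have "dtu_sup (hi (node_of ?W)) - dtu_sup (lo (node_of ?W)) \<le> dtu_sup (x + h) - dtu_sup x"
    using dtu_sup_mono[of x "lo (node_of ?W)"] dtu_sup_mono[of "hi (node_of ?W)" "x + h"] by simp
  then show ?thesis using dtu_sup_hi[of ?W] dtu_sup_lo[of ?W] by simp
qed

lemma dtu_sup_increment_lower_left:
  assumes x: "unit_irrat x" and h: "h < 0" and exit: "sb_exit x h k"
  shows "mu^2 * mass (sb_word True x (next_same_turn x k)) \<le> dtu_sup x - dtu_sup (x + h)"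
proof -
  let ?V = "sb_word True x (next_same_turn x k)"
  let ?W = "?V @ [False]"
  note geo = sb_exit_left[OF x h exit]
  have "x + h < lo (node_of ?W)" "hi (node_of ?W) < x"
    using geo by (simp_all add: sb_child_def sb_chain_eq_node_of)
  then have "dtu_sup (hi (node_of ?W)) - dtu_sup (lo (node_of ?W)) \<le> dtu_sup x - dtu_sup (x + h)"
    using dtu_sup_mono[of "hi (node_of ?W)" x] dtu_sup_mono[of "x + h" "lo (node_of ?W)"] by simp
  moreover have "mu^2 * mass ?V \<le> mu * mass ?V"
    using mu_pos mu_lt1 mass_pos[of ?V] by (simp add: power2_eq_square)
  ultimately show ?thesis using dtu_sup_hi[of ?W] dtu_sup_lo[of ?W] by simp
qed

lemma diff_quot_lower:
  assumes x: "unit_irrat x" and h: "h \<noteq> 0" and exit: "sb_exit x h k"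
  shows "mu^2 * mass (sb_word True x (next_same_turn x k))
           * (real (den_lo (sb_chain True x k)) * real (den_hi (sb_chain True x k)))
         \<le> (dtu_gold (x + h) - dtu_gold x) / h"
proof -
  let ?a = "mu^2 * mass (sb_word True x (next_same_turn x k))"
    and ?D = "real (den_lo (sb_chain True x k)) * real (den_hi (sb_chain True x k))"
  define q where "q = (dtu_gold (x + h) - dtu_gold x) / h"
  have q: "0 \<le> q" unfolding q_def by (rule diff_quot_nonneg[OF x exit])
  have "dtu_sup (x + h) - dtu_sup x = q * h" using dtu_gold_sb_exit[OF x exit] h by (simp add: q_def)
  then have "\<bar>dtu_sup (x + h) - dtu_sup x\<bar> = q * \<bar>h\<bar>" using q by (simp add: abs_mult)
  then have "?a \<le> q * \<bar>h\<bar>"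
    using dtu_sup_increment_lower_right[OF x _ exit] dtu_sup_increment_lower_left[OF x _ exit] h
    by (cases "0 < h") auto
  then have "?a * ?D \<le> q * \<bar>h\<bar> * ?D" by (rule mult_right_mono) simp
  also have "\<dots> \<le> q" using mult_left_le[OF sb_exit_width[OF x exit] q] by (simp add: mult.assoc)
  finally show ?thesis unfolding q_def .
qed

definition max_den :: "node \<Rightarrow> real" where "max_den n = max (real (den_lo n)) (real (den_hi n))"

lemma max_den_ge1: "max_den (node_of V) \<ge> 1"
  using den_lo_pos[OF sb_valid_node_of[of V]] by (simp add: max_den_def)

lemma width_append_lefts:
  "1 / ((real i + 2) * max_den (node_of V)^2)
     \<le> hi (node_of (V @ replicate (Suc i) False)) - lo (node_of V)"
proof -
  let ?q = "real (den_lo (node_of V))" and ?s = "real (den_hi (node_of V))" and ?M = "max_den (node_of V)"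
  have q: "1 \<le> ?q" "1 \<le> ?s" using den_lo_pos[OF sb_valid_node_of[of V]] den_hi_pos[OF sb_valid_node_of[of V]] by auto
  have "?q * (?s + real (Suc i) * ?q) \<le> ?M * (?M + real (Suc i) * ?M)"
    using q by (intro mult_mono add_mono mult_left_mono) (auto simp: max_den_def)
  also have "\<dots> = (real i + 2) * ?M^2" by (simp add: algebra_simps power2_eq_square)
  finally have A: "?q * (?s + real (Suc i) * ?q) \<le> (real i + 2) * ?M^2" .
  have pos: "0 < ?q * (?s + real (Suc i) * ?q)" using q by (intro mult_pos_pos add_pos_nonneg) auto
  have "1 / ((real i + 2) * ?M^2) \<le> 1 / (?q * (?s + real (Suc i) * ?q))"
    by (rule divide_left_mono[OF A zero_le_one mult_pos_pos[OF _ pos]]) (use A pos in linarith)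
  also have "\<dots> = hi (node_of (V @ replicate (Suc i) False)) - lo (node_of (V @ replicate (Suc i) False))"
    using hi_minus_lo[OF sb_valid_node_of, of "V @ replicate (Suc i) False"] node_of_append_lefts[of V "Suc i"]
    by (simp add: algebra_simps del: replicate.simps)
  finally show ?thesis using node_of_append_lefts[of V "Suc i"] by (simp del: replicate.simps)
qed

lemma width_append_rights:
  "1 / ((real i + 2) * max_den (node_of V)^2)
     \<le> hi (node_of V) - lo (node_of (V @ replicate (Suc i) True))"
proof -
  let ?q = "real (den_lo (node_of V))" and ?s = "real (den_hi (node_of V))" and ?M = "max_den (node_of V)"
  have q: "1 \<le> ?q" "1 \<le> ?s" using den_lo_pos[OF sb_valid_node_of[of V]] den_hi_pos[OF sb_valid_node_of[of V]] by auto
  have "(?q + real (Suc i) * ?s) * ?s \<le> (?M + real (Suc i) * ?M) * ?M"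
    using q by (intro mult_mono add_mono mult_left_mono) (auto simp: max_den_def)
  also have "\<dots> = (real i + 2) * ?M^2" by (simp add: algebra_simps power2_eq_square)
  finally have A: "(?q + real (Suc i) * ?s) * ?s \<le> (real i + 2) * ?M^2" .
  have pos: "0 < (?q + real (Suc i) * ?s) * ?s" using q by (intro mult_pos_pos add_pos_nonneg) auto
  have "1 / ((real i + 2) * ?M^2) \<le> 1 / ((?q + real (Suc i) * ?s) * ?s)"
    by (rule divide_left_mono[OF A zero_le_one mult_pos_pos[OF _ pos]]) (use A pos in linarith)
  also have "\<dots> = hi (node_of (V @ replicate (Suc i) True)) - lo (node_of (V @ replicate (Suc i) True))"
    using hi_minus_lo[OF sb_valid_node_of, of "V @ replicate (Suc i) True"] node_of_append_rights[of V "Suc i"]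
    by (simp add: algebra_simps del: replicate.simps)
  finally show ?thesis using node_of_append_rights[of V "Suc i"] by (simp del: replicate.simps)
qed

lemma exit_append_lefts:
  assumes "lo (node_of V) < z" "z \<le> hi (node_of V)"
  shows "\<exists>i. z \<le> hi (node_of (V @ replicate i False)) \<and> hi (node_of (V @ replicate (Suc i) False)) < z"
proof -
  let ?P = "\<lambda>i. z \<le> hi (node_of (V @ replicate i False))"
  obtain n where n: "n \<noteq> 0" "inverse (real n) < z - lo (node_of V)"
    using real_arch_inverse[of "z - lo (node_of V)"] assms by auto
  have "hi (node_of (V @ replicate n False)) - lo (node_of (V @ replicate n False)) \<le> 1 / (real (length V + n) + 1)"
    using node_width_le[of "V @ replicate n False"] by simp
  also have "\<dots> \<le> inverse (real n)" using n by (simp add: field_simps)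
  finally have "\<not> ?P n" using n node_of_append_lefts[of V n] by auto
  moreover have "?P 0" using assms by simp
  ultimately obtain i where "?P i" "\<not> ?P (Suc i)" using nat_crossing[of ?P 0 n] by blast
  then show ?thesis by (auto simp: not_le)
qed

lemma exit_append_rights:
  assumes "lo (node_of V) \<le> z" "z < hi (node_of V)"
  shows "\<exists>i. lo (node_of (V @ replicate i True)) \<le> z \<and> z < lo (node_of (V @ replicate (Suc i) True))"
proof -
  let ?P = "\<lambda>i. lo (node_of (V @ replicate i True)) \<le> z"
  obtain n where n: "n \<noteq> 0" "inverse (real n) < hi (node_of V) - z"
    using real_arch_inverse[of "hi (node_of V) - z"] assms by auto
  have "hi (node_of (V @ replicate n True)) - lo (node_of (V @ replicate n True)) \<le> 1 / (real (length V + n) + 1)"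
    using node_width_le[of "V @ replicate n True"] by simp
  also have "\<dots> \<le> inverse (real n)" using n by (simp add: field_simps)
  finally have "\<not> ?P n" using n node_of_append_rights[of V n] by auto
  moreover have "?P 0" using assms by simp
  ultimately obtain i where "?P i" "\<not> ?P (Suc i)" using nat_crossing[of ?P 0 n] by blast
  then show ?thesis by (auto simp: not_le)
qed

lemma mu_power_le_of_width:
  assumes one: "1 \<le> d * ((real i + 2) * M)" and "0 \<le> M" "0 \<le> w"
  shows "mu ^ i * w \<le> 2 * w * M * d"
proof -
  have "0 \<le> d"
  proof (rule ccontr)
    assume "\<not> 0 \<le> d"
    then have "d * ((real i + 2) * M) \<le> 0" using assms(2) by (simp add: mult_nonpos_nonneg)
    with one show False by simp
  qed
  have "mu ^ i * w \<le> mu ^ i * w * (d * ((real i + 2) * M))"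
    using mult_left_mono[OF one, of "mu ^ i * w"] mu_pos assms(3) by simp
  also have "\<dots> = ((real i + 2) * mu ^ i) * (w * M * d)" by (simp add: algebra_simps)
  also have "\<dots> \<le> 2 * (w * M * d)"
    using linear_times_mu_power_le[of i] assms(2,3) \<open>0 \<le> d\<close> by (intro mult_right_mono) auto
  finally show ?thesis by simp
qed

lemma dtu_sup_increment_from_lo:
  assumes z: "lo (node_of V) < z" "z \<le> hi (node_of V)"
  shows "dtu_sup z - dtu_sup (lo (node_of V)) \<le> 2 * mass V * max_den (node_of V)^2 * (z - lo (node_of V))"
proof -
  obtain i where i: "z \<le> hi (node_of (V @ replicate i False))" "hi (node_of (V @ replicate (Suc i) False)) < z"
    using exit_append_lefts[OF z] by blast
  have "dtu_sup z \<le> offset V + mu ^ i * mass V"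
    using dtu_sup_mono[OF i(1)] dtu_sup_hi[of "V @ replicate i False"] node_of_append_lefts[of V i] by simp
  then have "dtu_sup z - dtu_sup (lo (node_of V)) \<le> mu ^ i * mass V" using dtu_sup_lo[of V] by simp
  moreover have "1 / ((real i + 2) * max_den (node_of V)^2) < z - lo (node_of V)"
    using width_append_lefts[of i V] i(2) by linarith
  then have "1 \<le> (z - lo (node_of V)) * ((real i + 2) * max_den (node_of V)^2)"
    using max_den_ge1[of V] by (simp add: pos_divide_less_eq)
  then have "mu ^ i * mass V \<le> 2 * mass V * max_den (node_of V)^2 * (z - lo (node_of V))"
    using mass_pos[of V] by (intro mu_power_le_of_width) auto
  ultimately show ?thesis by linarith
qed

lemma dtu_sup_increment_to_hi:
  assumes z: "lo (node_of V) \<le> z" "z < hi (node_of V)"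
  shows "dtu_sup (hi (node_of V)) - dtu_sup z \<le> 2 * mass V * max_den (node_of V)^2 * (hi (node_of V) - z)"
proof -
  obtain i where i: "lo (node_of (V @ replicate i True)) \<le> z" "z < lo (node_of (V @ replicate (Suc i) True))"
    using exit_append_rights[OF z] by blast
  have "offset V + mass V - mu ^ (2 * i) * mass V \<le> dtu_sup z"
    using dtu_sup_mono[OF i(1)] dtu_sup_lo[of "V @ replicate i True"] node_of_append_rights[of V i]
    by (simp add: algebra_simps)
  moreover have "mu ^ (2 * i) * mass V \<le> mu ^ i * mass V"
    using mu_pos mu_lt1 mass_pos[of V] by (intro mult_right_mono power_decreasing) auto
  ultimately have "dtu_sup (hi (node_of V)) - dtu_sup z \<le> mu ^ i * mass V" using dtu_sup_hi[of V] by simp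
  moreover have "1 / ((real i + 2) * max_den (node_of V)^2) < hi (node_of V) - z"
    using width_append_rights[of i V] i(2) by linarith
  then have "1 \<le> (hi (node_of V) - z) * ((real i + 2) * max_den (node_of V)^2)"
    using max_den_ge1[of V] by (simp add: pos_divide_less_eq)
  then have "mu ^ i * mass V \<le> 2 * mass V * max_den (node_of V)^2 * (hi (node_of V) - z)"
    using mass_pos[of V] by (intro mu_power_le_of_width) auto
  ultimately show ?thesis by linarith
qed

definition slope_bound :: "real \<Rightarrow> nat \<Rightarrow> real" where
  "slope_bound x k = mass (sb_word True x k) * max_den (sb_chain True x k)^2"

lemma slope_bound_nonneg: "slope_bound x k \<ge> 0"
  unfolding slope_bound_def using mass_pos[of "sb_word True x k"] by (intro mult_nonneg_nonneg) auto

lemma max_den_sb_child: "max_den (sb_child c n) \<le> 2 * max_den n"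
  by (cases n) (auto simp: max_den_def sb_child_def)

lemma mass_max_den_snoc_le:
  "mass (W @ [c]) * max_den (node_of (W @ [c]))^2 \<le> 4 * (mass W * max_den (node_of W)^2)"
proof -
  have "max_den (node_of (W @ [c]))^2 \<le> (2 * max_den (node_of W))^2"
    using max_den_sb_child[of c "node_of W"] max_den_ge1[of "W @ [c]"] by (intro power_mono) auto
  moreover have "mass (W @ [c]) \<le> mass W"
    using mu_pos mu_lt1 mass_pos[of W] by (simp add: power_le_one mult_left_le_one_le)
  ultimately have "mass (W @ [c]) * max_den (node_of (W @ [c]))^2 \<le> mass W * (2 * max_den (node_of W))^2"
    using mass_pos[of "W @ [c]"] mass_pos[of W] by (intro mult_mono) auto
  then show ?thesis by (simp add: power_mult_distrib)
qed

lemma dtu_sup_increment_upper_right: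
  assumes x: "unit_irrat x" and h: "0 < h" and exit: "sb_exit x h k"
  shows "dtu_sup (x + h) - dtu_sup x \<le> 8 * max (slope_bound x k) (slope_bound x (next_same_turn x k)) * h"
proof -
  let ?k' = "next_same_turn x k" and ?m = "mediant (sb_chain True x k)"
  let ?A = "max (slope_bound x k) (slope_bound x ?k')"
  note geo = sb_exit_right[OF x h exit]
  have "x < ?m" using geo(4,5) mediant_lt_hi[OF sb_valid_chain[of True x ?k']] by simp
  have "dtu_sup ?m - dtu_sup x \<le> 2 * slope_bound x ?k' * (?m - x)"
    using dtu_sup_increment_to_hi[of "sb_word True x ?k'" x] sb_chain_strict[OF x, of ?k'] geo(4)
    by (simp add: slope_bound_def sb_chain_eq_node_of)
  moreover have "dtu_sup (x + h) - dtu_sup ?m \<le> 8 * slope_bound x k * (x + h - ?m)"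
  proof -
    let ?Q = "sb_word True x k @ [True]"
    have "dtu_sup (x + h) - dtu_sup ?m \<le> 2 * (mass ?Q * max_den (node_of ?Q)^2) * (x + h - ?m)"
      using dtu_sup_increment_from_lo[of ?Q "x + h"] geo(1,2)
      by (simp add: sb_child_def sb_chain_eq_node_of mult.assoc)
    also have "\<dots> \<le> 2 * (4 * slope_bound x k) * (x + h - ?m)"
      using mass_max_den_snoc_le[of "sb_word True x k" True] geo(1)
      by (intro mult_right_mono mult_left_mono) (auto simp: slope_bound_def sb_chain_eq_node_of)
    finally show ?thesis by simp
  qed
  ultimately have "dtu_sup (x + h) - dtu_sup x \<le> 8 * slope_bound x k * (x + h - ?m) + 2 * slope_bound x ?k' * (?m - x)"
    by simp
  also have "\<dots> \<le> 8 * ?A * (x + h - ?m) + 8 * ?A * (?m - x)"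
    using geo(1) \<open>x < ?m\<close> slope_bound_nonneg[of x k] slope_bound_nonneg[of x ?k']
    by (intro add_mono mult_right_mono) auto
  also have "\<dots> = 8 * ?A * h" by (simp add: algebra_simps)
  finally show ?thesis .
qed

lemma dtu_sup_increment_upper_left:
  assumes x: "unit_irrat x" and h: "h < 0" and exit: "sb_exit x h k"
  shows "dtu_sup x - dtu_sup (x + h) \<le> 8 * max (slope_bound x k) (slope_bound x (next_same_turn x k)) * (- h)"
proof -
  let ?k' = "next_same_turn x k" and ?m = "mediant (sb_chain True x k)"
  let ?A = "max (slope_bound x k) (slope_bound x ?k')"
  note geo = sb_exit_left[OF x h exit]
  have "?m < x" using geo(4,5) lo_lt_mediant[OF sb_valid_chain[of True x ?k']] by simp
  have "dtu_sup x - dtu_sup ?m \<le> 2 * slope_bound x ?k' * (x - ?m)"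
    using dtu_sup_increment_from_lo[of "sb_word True x ?k'" x] sb_chain_strict[OF x, of ?k'] geo(4)
    by (simp add: slope_bound_def sb_chain_eq_node_of)
  moreover have "dtu_sup ?m - dtu_sup (x + h) \<le> 8 * slope_bound x k * (?m - (x + h))"
  proof -
    let ?Q = "sb_word True x k @ [False]"
    have "dtu_sup ?m - dtu_sup (x + h) \<le> 2 * (mass ?Q * max_den (node_of ?Q)^2) * (?m - (x + h))"
      using dtu_sup_increment_to_hi[of ?Q "x + h"] geo(1,2)
      by (simp add: sb_child_def sb_chain_eq_node_of mult.assoc)
    also have "\<dots> \<le> 2 * (4 * slope_bound x k) * (?m - (x + h))"
      using mass_max_den_snoc_le[of "sb_word True x k" False] geo(1)
      by (intro mult_right_mono mult_left_mono) (auto simp: slope_bound_def sb_chain_eq_node_of)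
    finally show ?thesis by simp
  qed
  ultimately have "dtu_sup x - dtu_sup (x + h) \<le> 8 * slope_bound x k * (?m - (x + h)) + 2 * slope_bound x ?k' * (x - ?m)"
    by simp
  also have "\<dots> \<le> 8 * ?A * (?m - (x + h)) + 8 * ?A * (x - ?m)"
    using geo(1) \<open>?m < x\<close> slope_bound_nonneg[of x k] slope_bound_nonneg[of x ?k']
    by (intro add_mono mult_right_mono) auto
  also have "\<dots> = 8 * ?A * (- h)" by (simp add: algebra_simps)
  finally show ?thesis .
qed

lemma diff_quot_upper:
  assumes x: "unit_irrat x" and h: "h \<noteq> 0" and exit: "sb_exit x h k"
  shows "(dtu_gold (x + h) - dtu_gold x) / h \<le> 8 * max (slope_bound x k) (slope_bound x (next_same_turn x k))"
proof (cases "0 < h")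
  case True
  then show ?thesis
    using dtu_sup_increment_upper_right[OF x True exit] dtu_gold_sb_exit[OF x exit] by (simp add: pos_divide_le_eq)
next
  case False
  then have "h < 0" using h by simp
  then show ?thesis
    using dtu_sup_increment_upper_left[OF x \<open>h < 0\<close> exit] dtu_gold_sb_exit[OF x exit] by (simp add: neg_divide_le_eq)
qed

section \<open>Part (i): an infinite derivative\<close>

lemma golden_den_growth_lower:
  assumes "golden_den_growth n a b"
  shows "golden ^ n \<le> golden^2 * a" "golden ^ n \<le> golden^2 * b"
proof -
  from assms have I: "golden ^ n \<le> golden * a" "golden ^ n \<le> golden^2 * b" "b \<le> a"
    by (auto simp: golden_den_growth_def)
  have "0 < golden ^ n" using golden_gt1 by simp
  then have "0 < golden^2 * b" using I(2) by linarith
  then have "0 \<le> a" using I(3) golden_gt1 by (simp add: zero_less_mult_iff)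
  then have "golden * a \<le> golden^2 * a" using golden_gt1 by (intro mult_right_mono) (simp_all add: power2_eq_square)
  then show "golden ^ n \<le> golden^2 * a" using I(1) by linarith
  show "golden ^ n \<le> golden^2 * b" by (fact I(2))
qed

lemma den_lower_bound:
  assumes x: "unit_irrat x" and n: "n \<ge> 1" and k: "block_end x n \<le> k"
  shows "golden ^ n \<le> golden^2 * real (den_lo (sb_chain True x k))"
    and "golden ^ n \<le> golden^2 * real (den_hi (sb_chain True x k))"
proof -
  let ?N = "sb_chain True x (block_end x n)" and ?K = "sb_chain True x k"
  have "golden ^ n \<le> golden^2 * real (den_lo ?N)" "golden ^ n \<le> golden^2 * real (den_hi ?N)"
    using golden_den_growth_block_end[OF x n] golden_den_growth_lower by (auto split: if_splits)
  moreover have "golden^2 * real (den_lo ?N) \<le> golden^2 * real (den_lo ?K)"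
    "golden^2 * real (den_hi ?N) \<le> golden^2 * real (den_hi ?K)"
    using sb_chain_den_mono[OF k] by (auto intro: mult_left_mono)
  ultimately show "golden ^ n \<le> golden^2 * real (den_lo ?K)" "golden ^ n \<le> golden^2 * real (den_hi ?K)"
    by linarith+
qed

lemma block_lower_bound_eq_powr:
  assumes x: "unit_irrat x" and m: "m \<ge> 1"
  shows "mu^2 * mu ^ mass_exp (sb_word True x (block_end x (Suc m))) * (golden^(m-1) / golden^2)^2
         = golden powr (2 * real m - 7 - S_phi (Suc m) x)"
    (is "?V = _")
proof -
  let ?E = "mass_exp (sb_word True x (block_end x (Suc m)))"
  have g0: "golden > 0" using golden_gt1 by simp
  have S: "S_phi (Suc m) x = real ?E + 1" using mass_exp_block_end[OF x, of "Suc m"] by simp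
  have "ln ?V = 2 * ln mu + real ?E * ln mu + 2 * (real (m - 1) * ln golden - 2 * ln golden)"
    using mu_pos g0 by (simp add: ln_mult ln_div ln_realpow)
  also have "\<dots> = (2 * real m - 7 - S_phi (Suc m) x) * ln golden"
    unfolding S ln_mu using m by (simp add: of_nat_diff algebra_simps)
  finally have "golden powr (2 * real m - 7 - S_phi (Suc m) x) = exp (ln ?V)"
    using g0 by (simp add: powr_def)
  also have "\<dots> = ?V" using mu_pos g0 by simp
  finally show ?thesis ..
qed

lemma diff_quot_lower_block:
  assumes x: "unit_irrat x" and blk: "m \<ge> 2" "block_end x (m - 1) \<le> k" "k < block_end x m"
  shows "golden powr (2 * real m - 7 - S_phi (Suc m) x)
         \<le> mu^2 * mass (sb_word True x (next_same_turn x k))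
             * (real (den_lo (sb_chain True x k)) * real (den_hi (sb_chain True x k)))"
proof -
  let ?E = "mass_exp (sb_word True x (block_end x (Suc m)))" and ?N = "sb_chain True x k"
  have "next_same_turn x k \<le> block_end x (Suc m)"
    using next_same_turn_le_block_end[OF x _ blk(2,3)] blk(1) by simp
  then have "mass_exp (sb_word True x (next_same_turn x k)) \<le> ?E" by (rule mass_exp_sb_word_mono)
  then have w: "mu ^ ?E \<le> mass (sb_word True x (next_same_turn x k))"
    unfolding mass_def using mu_pos mu_lt1 by (intro power_decreasing) auto
  have g0: "golden > 0" using golden_gt1 by simp
  have "golden^(m-1) / golden^2 \<le> real (den_lo ?N)" "golden^(m-1) / golden^2 \<le> real (den_hi ?N)"
    using den_lower_bound[OF x, of "m - 1" k] blk g0 by (simp_all add: pos_divide_le_eq mult.commute)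
  from mult_mono[OF this] have "(golden^(m-1) / golden^2)^2 \<le> real (den_lo ?N) * real (den_hi ?N)"
    using g0 by (simp add: power2_eq_square)
  then have "mu^2 * mu ^ ?E * (golden^(m-1) / golden^2)^2
      \<le> mu^2 * mass (sb_word True x (next_same_turn x k)) * (real (den_lo ?N) * real (den_hi ?N))"
    using w mu_pos mass_pos[of "sb_word True x (next_same_turn x k)"] by (intro mult_mono mult_left_mono) auto
  then show ?thesis using block_lower_bound_eq_powr[OF x, of m] blk(1) by simp
qed

lemma limsup_less_imp_linear_bound:
  assumes "limsup (\<lambda>t. ereal (S_phi (2 * t) x / real t)) < 4"
  shows "\<exists>c T. 0 \<le> c \<and> c < 4 \<and> (\<forall>t\<ge>T. S_phi (2*t) x \<le> c * real t)"
proof -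
  obtain c0 where c0: "limsup (\<lambda>t. ereal (S_phi (2 * t) x / real t)) < ereal c0" "ereal c0 < 4"
    using ereal_dense2[OF assms] by blast
  have "\<forall>\<^sub>F t in sequentially. ereal (S_phi (2 * t) x / real t) < ereal c0"
    using Limsup_lessD[OF c0(1)] .
  then obtain T where T: "\<forall>t\<ge>T. S_phi (2 * t) x / real t < c0"
    by (auto simp: eventually_sequentially)
  show ?thesis
  proof (intro exI[of _ "max c0 0"] exI[of _ "max T 1"] conjI allI impI)
    show "0 \<le> max c0 0" by simp
    show "max c0 0 < 4" using c0(2) by simp
    fix t assume t: "max T 1 \<le> t"
    hence "S_phi (2 * t) x / real t < c0" "t \<ge> 1" using T by auto
    hence "S_phi (2 * t) x < c0 * real t" by (simp add: field_simps)
    also have "\<dots> \<le> max c0 0 * real t" by (intro mult_right_mono) auto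
    finally show "S_phi (2 * t) x \<le> max c0 0 * real t" by simp
  qed
qed

lemma eventually_golden_powr_ge:
  assumes c: "0 \<le> c" "c < 4" and T: "\<forall>t\<ge>T. S_phi (2*t) x \<le> c * real t"
  shows "\<forall>\<^sub>F m in sequentially. M \<le> golden powr (2 * real m - 7 - S_phi (Suc m) x)"
proof -
  define L where "L = log golden (max M 1)"
  define A where "A = (\<bar>L\<bar> + 7 + c) / (2 - c/2)"
  have "\<forall>\<^sub>F m in sequentially. nat \<lceil>A\<rceil> + 2 * T \<le> m" by simp
  then show ?thesis
  proof (rule eventually_mono)
    fix m assume m: "nat \<lceil>A\<rceil> + 2 * T \<le> m"
    then have "T \<le> m div 2 + 1" by simp
    have "S_phi (Suc m) x \<le> S_phi (2 * (m div 2 + 1)) x" by (intro S_phi_mono) presburger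
    also have "\<dots> \<le> c * real (m div 2 + 1)" using T \<open>T \<le> m div 2 + 1\<close> by blast
    also have "\<dots> \<le> c * (real m / 2 + 1)" using c by (intro mult_left_mono) linarith+
    finally have S: "S_phi (Suc m) x \<le> c * (real m / 2 + 1)" .
    have "nat \<lceil>A\<rceil> \<le> m" using m by linarith
    then have "A \<le> real m" by (simp add: nat_ceiling_le_eq)
    moreover have "0 < 2 - c/2" using c by simp
    ultimately have "\<bar>L\<bar> + 7 + c \<le> real m * (2 - c/2)" by (simp add: A_def pos_divide_le_eq)
    with S have "L \<le> 2 * real m - 7 - S_phi (Suc m) x" by (simp add: algebra_simps)
    then have "golden powr L \<le> golden powr (2 * real m - 7 - S_phi (Suc m) x)"
      using golden_gt1 by (intro powr_mono) auto
    moreover have "golden powr L = max M 1" using golden_gt1 by (simp add: L_def powr_log_cancel)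
    ultimately show "M \<le> golden powr (2 * real m - 7 - S_phi (Suc m) x)" by linarith
  qed
qed

theorem DTU_golden_deriv_infinite:
  assumes x: "unit_irrat x" and lim: "limsup (\<lambda>t. ereal (S_phi (2 * t) x / real t)) < 4"
  shows "filterlim (\<lambda>h. (DTU (1 / golden) (x + h) - DTU (1 / golden) x) / h) at_top (at 0)"
  unfolding DTU_golden_eq filterlim_at_top
proof
  fix Z :: real
  obtain c T where "0 \<le> c" "c < 4" "\<forall>t\<ge>T. S_phi (2*t) x \<le> c * real t"
    using limsup_less_imp_linear_bound[OF lim] by blast
  from eventually_golden_powr_ge[OF this, of Z] obtain m0
    where m0: "\<And>m. m \<ge> m0 \<Longrightarrow> Z \<le> golden powr (2 * real m - 7 - S_phi (Suc m) x)"
    by (auto simp: eventually_sequentially)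
  show "\<forall>\<^sub>F h in at 0. Z \<le> (dtu_gold (x + h) - dtu_gold x) / h"
    using eventually_sb_exit[OF x, of "block_end x (max m0 2)"]
  proof (rule eventually_mono)
    fix h assume "h \<noteq> 0 \<and> (\<exists>k\<ge>block_end x (max m0 2). sb_exit x h k)"
    then obtain k where h: "h \<noteq> 0" and k: "block_end x (max m0 2) \<le> k" "sb_exit x h k" by blast
    obtain m where blk: "m \<ge> 1" "block_end x (m - 1) \<le> k" "k < block_end x m"
      using block_containing[OF x] by blast
    have m: "max m0 2 < m" using block_index_gt[OF x k(1) blk(3)] .
    then have "Z \<le> golden powr (2 * real m - 7 - S_phi (Suc m) x)" using m0 by simp
    also have "\<dots> \<le> mu^2 * mass (sb_word True x (next_same_turn x k))
             * (real (den_lo (sb_chain True x k)) * real (den_hi (sb_chain True x k)))"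
      using diff_quot_lower_block[OF x _ blk(2,3)] m by simp
    also have "\<dots> \<le> (dtu_gold (x + h) - dtu_gold x) / h" by (rule diff_quot_lower[OF x h k(2)])
    finally show "Z \<le> (dtu_gold (x + h) - dtu_gold x) / h" .
  qed
qed

section \<open>Part (ii): a vanishing derivative\<close>

lemma DTU_golden_deriv_zero:
  assumes x: "unit_irrat x" and slope: "slope_bound x \<longlonglongrightarrow> 0"
  shows "(DTU (1 / golden) has_real_derivative 0) (at x)"
  unfolding DTU_golden_eq DERIV_def tendsto_iff
proof (intro allI impI)
  fix e :: real assume e: "e > 0"
  then obtain K where "\<forall>k\<ge>K. norm (slope_bound x k - 0) < e / 16"
    using LIMSEQ_D[OF slope, of "e / 16"] by auto
  then have K: "\<And>k. k \<ge> K \<Longrightarrow> slope_bound x k < e / 16"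
    using slope_bound_nonneg by (simp add: abs_of_nonneg)
  show "\<forall>\<^sub>F h in at 0. dist ((dtu_gold (x + h) - dtu_gold x) / h) 0 < e"
    using eventually_sb_exit[OF x, of K]
  proof (rule eventually_mono)
    fix h assume "h \<noteq> 0 \<and> (\<exists>k\<ge>K. sb_exit x h k)"
    then obtain k where h: "h \<noteq> 0" and k: "K \<le> k" "sb_exit x h k" by blast
    have "K \<le> next_same_turn x k" using next_same_turn_props(1)[OF x, of k] k(1) by simp
    then have "max (slope_bound x k) (slope_bound x (next_same_turn x k)) < e / 16"
      using K[OF k(1)] K[OF \<open>K \<le> next_same_turn x k\<close>] by (simp add: max_less_iff_conj)
    then show "dist ((dtu_gold (x + h) - dtu_gold x) / h) 0 < e"
      using diff_quot_upper[OF x h k(2)] diff_quot_nonneg[OF x k(2)] by (simp add: dist_real_def)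
  qed
qed

text \<open>Over a block of \<open>b\<close> steps \<open>max_den\<close> may grow by the factor \<open>b + 1\<close>, i.e.\ by 2 for
  \<open>b = 1\<close>; the weighted potential below grows by at most \<open>b \<phi>\<close>, which is what the long runs
  of partial quotients 1 in part (ii) require.\<close>

definition den_potential :: "node \<Rightarrow> real" where
  "den_potential n = golden * max_den n + min (real (den_lo n)) (real (den_hi n))"

definition block_slope_bound :: "real \<Rightarrow> nat \<Rightarrow> real" where
  "block_slope_bound x m = mass (sb_word True x (block_end x m)) * den_potential (sb_chain True x (block_end x m))^2"

lemma max_den_le_den_potential: "max_den n \<le> den_potential n"
proof -
  have "max_den n \<ge> 0" by (simp add: max_den_def)
  hence "max_den n \<le> golden * max_den n" using golden_gt1 by (simp add: mult_le_cancel_right1)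
  thus ?thesis by (simp add: den_potential_def)
qed

lemma den_potential_nonneg: "den_potential n \<ge> 0"
  using golden_gt1 by (simp add: den_potential_def max_den_def)

lemma block_slope_bound_nonneg: "block_slope_bound x m \<ge> 0"
  unfolding block_slope_bound_def using mass_pos[of "sb_word True x (block_end x m)"] by (intro mult_nonneg_nonneg) auto

lemma golden_potential_step:
  fixes a b c :: real
  assumes "0 \<le> b" "b \<le> a" "1 \<le> c"
  shows "golden * (b + c * a) + a \<le> c * golden * (golden * a + b)"
proof -
  have "c * golden * (golden * a + b) = c * golden^2 * a + c * golden * b"
    by (simp add: algebra_simps power2_eq_square)
  also have "\<dots> = golden * (b + c * a) + a + ((c - 1) * a + (c - 1) * golden * b)"
    by (simp add: golden_sq algebra_simps)
  finally show ?thesis using assms golden_gt1 by simp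
qed

lemma den_potential_within_block:
  assumes x: "unit_irrat x" and m: "m \<ge> 1" and j: "1 \<le> j" "j \<le> cf_quot x (Suc m)"
  shows "den_potential (sb_chain True x (block_end x m + j))
         \<le> real j * golden * den_potential (sb_chain True x (block_end x m))"
proof -
  let ?q = "real (den_lo (sb_chain True x (block_end x m)))"
    and ?s = "real (den_hi (sb_chain True x (block_end x m)))"
  have I: "if even m then ?s \<le> ?q else ?q \<le> ?s"
    using golden_den_growth_block_end[OF x m] by (simp add: golden_den_growth_def split: if_splits)
  have "?q \<le> real j * ?q" "?s \<le> real j * ?s" using j by (simp_all add: mult_le_cancel_right1)
  then have "?q \<le> ?s + real j * ?q" "?s \<le> ?q + real j * ?s" by simp_all
  show ?thesis
  proof (cases "even m")
    case True
    with I \<open>?q \<le> ?s + real j * ?q\<close> show ?thesis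
      using dens_within_block[OF x m j(2)] golden_potential_step[of ?s ?q "real j"] j
      by (simp add: den_potential_def max_den_def max.absorb1 max.absorb2 min.absorb1 min.absorb2)
  next
    case False
    with I \<open>?s \<le> ?q + real j * ?s\<close> show ?thesis
      using dens_within_block[OF x m j(2)] golden_potential_step[of ?q ?s "real j"] j
      by (simp add: den_potential_def max_den_def max.absorb1 max.absorb2 min.absorb1 min.absorb2 add.commute)
  qed
qed

lemma mass_within_block:
  assumes x: "unit_irrat x" and m: "m \<ge> 1" and j: "j \<le> cf_quot x (Suc m)"
  shows "mass (sb_word True x (block_end x m + j)) = mass (sb_word True x (block_end x m)) * mu ^ (j * (if even (Suc m) then 2 else 1))"
  using mass_exp_within_block[OF x m j] by (simp add: mass_def power_add)

lemma den_potential_within_block_le: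
  assumes x: "unit_irrat x" and m: "m \<ge> 1" and j: "j \<le> cf_quot x (Suc m)"
  shows "den_potential (sb_chain True x (block_end x m + j))
         \<le> real (cf_quot x (Suc m)) * golden * den_potential (sb_chain True x (block_end x m))"
proof (cases "j = 0")
  case True
  have "1 * 1 \<le> real (cf_quot x (Suc m)) * golden"
    using cf_quot_ge1[OF x, of "Suc m"] golden_gt1 by (intro mult_mono) auto
  with True show ?thesis
    using mult_right_mono[OF _ den_potential_nonneg] by (metis add_0_right mult_1)
next
  case False
  then have "den_potential (sb_chain True x (block_end x m + j))
      \<le> real j * golden * den_potential (sb_chain True x (block_end x m))"
    using den_potential_within_block[OF x m _ j] by simp
  also have "\<dots> \<le> real (cf_quot x (Suc m)) * golden * den_potential (sb_chain True x (block_end x m))"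
    using j golden_gt1 den_potential_nonneg by (intro mult_right_mono) auto
  finally show ?thesis .
qed

lemma mass_den_potential_within_block:
  assumes x: "unit_irrat x" and m: "m \<ge> 1" and j: "j \<le> cf_quot x (Suc m)"
  shows "mass (sb_word True x (block_end x m + j)) * den_potential (sb_chain True x (block_end x m + j))^2
         \<le> mass (sb_word True x (block_end x m)) * mu ^ (j * (if even (Suc m) then 2 else 1))
             * (real (cf_quot x (Suc m)) * golden)^2 * den_potential (sb_chain True x (block_end x m))^2"
proof -
  have "den_potential (sb_chain True x (block_end x m + j))^2
      \<le> (real (cf_quot x (Suc m)) * golden * den_potential (sb_chain True x (block_end x m)))^2"
    using den_potential_within_block_le[OF x m j] den_potential_nonneg by (intro power_mono) auto
  then show ?thesis
    using mass_within_block[OF x m j] mass_pos[of "sb_word True x (block_end x m)"] mu_pos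
    by (simp add: power_mult_distrib mult_left_mono mult.assoc)
qed

lemma slope_bound_within_block:
  assumes x: "unit_irrat x" and m: "m \<ge> 1" and j: "j \<le> cf_quot x (Suc m)"
  shows "slope_bound x (block_end x m + j) \<le> block_slope_bound x m * (real (cf_quot x (Suc m)) * golden)^2"
proof -
  let ?k = "block_end x m + j"
  have "slope_bound x ?k \<le> mass (sb_word True x ?k) * den_potential (sb_chain True x ?k)^2"
    unfolding slope_bound_def using max_den_le_den_potential mass_pos[of "sb_word True x ?k"]
    by (intro mult_left_mono power_mono) (auto simp: max_den_def)
  also have "\<dots> \<le> mass (sb_word True x (block_end x m)) * mu ^ (j * (if even (Suc m) then 2 else 1))
             * (real (cf_quot x (Suc m)) * golden)^2 * den_potential (sb_chain True x (block_end x m))^2"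
    by (rule mass_den_potential_within_block[OF x m j])
  also have "\<dots> = block_slope_bound x m * (real (cf_quot x (Suc m)) * golden)^2
                 * mu ^ (j * (if even (Suc m) then 2 else 1))"
    by (simp add: block_slope_bound_def algebra_simps)
  also have "\<dots> \<le> block_slope_bound x m * (real (cf_quot x (Suc m)) * golden)^2"
    using mu_pos mu_lt1 block_slope_bound_nonneg[of x m] by (intro mult_left_le) (simp_all add: power_le_one)
  finally show ?thesis .
qed

lemma block_slope_bound_Suc:
  assumes x: "unit_irrat x" and m: "m \<ge> 1"
  shows "block_slope_bound x (Suc m)
         \<le> (real (cf_quot x (Suc m)) * golden)^2 * mu ^ (cf_quot x (Suc m) * (if even (Suc m) then 2 else 1))
             * block_slope_bound x m"
  using mass_den_potential_within_block[OF x m order_refl] block_end_Suc[OF x m]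
  by (simp add: block_slope_bound_def algebra_simps)

locale golden_periodic_cf =
  fixes x :: real and N B :: nat
  assumes x: "unit_irrat x"
    and cf_quot_period: "\<And>i. cf_quot x (Suc i) = (if i mod (2*N+2) = 0 then B else 1)"
    and B1: "B \<ge> 1"
    and contraction: "real B^2 * golden^(N+2) * mu^B < 1"
begin

abbreviation period :: nat where "period \<equiv> 2 * N + 2"

lemma mod_period: "r < period \<Longrightarrow> (n * period + r) mod period = r"
  by (metis add.commute mod_less mod_mult_self1)

lemma one_le_B_golden_sq: "1 \<le> (real B * golden)^2"
proof -
  have "1 * 1 \<le> real B * golden" using B1 golden_gt1 by (intro mult_mono) auto
  then show ?thesis by (simp add: one_le_power)
qed

lemma block_slope_bound_Suc_inside_even:
  assumes "m \<ge> 1" "m mod period \<noteq> 0" "even (Suc m)"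
  shows "block_slope_bound x (Suc m) \<le> block_slope_bound x m"
proof -
  have "block_slope_bound x (Suc m) \<le> golden^2 * mu^2 * block_slope_bound x m"
    using block_slope_bound_Suc[OF x assms(1)] cf_quot_period[of m] assms by simp
  also have "golden^2 * mu^2 = 1" using mu_golden by (simp add: power_mult_distrib[symmetric] mult.commute)
  finally show ?thesis by simp
qed

lemma block_slope_bound_Suc_inside_odd:
  assumes "m \<ge> 1" "m mod period \<noteq> 0" "odd (Suc m)"
  shows "block_slope_bound x (Suc m) \<le> golden * block_slope_bound x m"
proof -
  have "block_slope_bound x (Suc m) \<le> golden^2 * mu * block_slope_bound x m"
    using block_slope_bound_Suc[OF x assms(1)] cf_quot_period[of m] assms by simp
  also have "golden^2 * mu = golden" using mu_golden by (simp add: power2_eq_square mult.commute mult.left_commute)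
  finally show ?thesis by simp
qed

lemma block_slope_bound_Suc_period_start:
  assumes "m \<ge> 1" "m mod period = 0"
  shows "block_slope_bound x (Suc m) \<le> (real B * golden)^2 * mu^B * block_slope_bound x m"
proof -
  have "even m" using assms(2) by (metis dvd_add_right_iff dvd_mult2 even_numeral mod_0_imp_dvd dvd_trans)
  then show ?thesis using block_slope_bound_Suc[OF x assms(1)] cf_quot_period[of m] assms(2) by simp
qed

lemma block_slope_bound_Suc_le:
  assumes "m \<ge> 1"
  shows "block_slope_bound x (Suc m) \<le> (real B * golden)^2 * block_slope_bound x m"
proof -
  let ?C = "(real B * golden)^2"
  have nonneg: "0 \<le> block_slope_bound x m" by (rule block_slope_bound_nonneg)
  consider "m mod period = 0" | "m mod period \<noteq> 0" "even (Suc m)" | "m mod period \<noteq> 0" "odd (Suc m)"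
    by blast
  then show ?thesis
  proof cases
    case 1
    have "?C * mu^B \<le> ?C" using mu_pos mu_lt1 one_le_B_golden_sq by (intro mult_left_le) (auto simp: power_le_one)
    then show ?thesis
      using block_slope_bound_Suc_period_start[OF assms 1] mult_right_mono[OF _ nonneg] by (meson order_trans)
  next
    case 2
    then show ?thesis
      using block_slope_bound_Suc_inside_even[OF assms] mult_right_mono[OF one_le_B_golden_sq nonneg] by simp
  next
    case 3
    have "golden \<le> golden * golden" using golden_gt1 by simp
    also have "\<dots> \<le> ?C" using B1 golden_gt1 by (simp add: power2_eq_square mult_mono)
    finally show ?thesis
      using block_slope_bound_Suc_inside_odd[OF assms 3] mult_right_mono[OF _ nonneg] by (meson order_trans)
  qed
qed

lemma block_slope_bound_inside_period:
  assumes "i \<le> N"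
  shows "block_slope_bound x (n * period + 1 + 2 * i) \<le> golden^i * block_slope_bound x (n * period + 1)"
  using assms
proof (induction i)
  case (Suc i)
  let ?m = "n * period + 1 + 2 * i"
  have "?m mod period = 1 + 2 * i" using mod_period[of "1 + 2 * i" n] Suc.prems by (simp add: add.assoc)
  moreover have "Suc ?m mod period = 2 + 2 * i" using mod_period[of "2 + 2 * i" n] Suc.prems by (simp add: add.assoc)
  ultimately have "block_slope_bound x (Suc (Suc ?m)) \<le> golden * block_slope_bound x ?m"
    using block_slope_bound_Suc_inside_even[of ?m] block_slope_bound_Suc_inside_odd[of "Suc ?m"] golden_gt1
    by (fastforce intro: order_trans mult_left_mono)
  also have "\<dots> \<le> golden * (golden^i * block_slope_bound x (n * period + 1))"
    using Suc golden_gt1 by (intro mult_left_mono) auto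
  finally show ?case by (simp add: mult.assoc)
qed simp

lemma block_slope_bound_period:
  "block_slope_bound x (Suc n * period + 1)
     \<le> (real B^2 * golden^(N+2) * mu^B) * block_slope_bound x (n * period + 1)"
proof -
  let ?m = "n * period + 1 + 2 * N" and ?c = "(real B * golden)^2 * mu^B"
  have "?m mod period = 1 + 2 * N" using mod_period[of "1 + 2 * N" n] by (simp add: add.assoc)
  then have "block_slope_bound x (Suc ?m) \<le> golden^N * block_slope_bound x (n * period + 1)"
    using block_slope_bound_Suc_inside_even[of ?m] block_slope_bound_inside_period[of N n] by simp
  moreover have "0 \<le> ?c" using mu_pos by simp
  ultimately have "?c * block_slope_bound x (Suc ?m) \<le> ?c * (golden^N * block_slope_bound x (n * period + 1))"
    by (rule mult_left_mono)
  moreover have e: "Suc ?m = Suc n * period" by simp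
  then have "Suc ?m mod period = 0" by (simp only: e mod_mult_self2_is_0)
  then have "block_slope_bound x (Suc (Suc ?m)) \<le> ?c * block_slope_bound x (Suc ?m)"
    using block_slope_bound_Suc_period_start[of "Suc ?m"] by simp
  ultimately have "block_slope_bound x (Suc (Suc ?m)) \<le> ?c * (golden^N * block_slope_bound x (n * period + 1))"
    by (rule order_trans[rotated])
  moreover have "Suc (Suc ?m) = Suc n * period + 1" by simp
  ultimately have "block_slope_bound x (Suc n * period + 1) \<le> ?c * (golden^N * block_slope_bound x (n * period + 1))"
    by (simp only:)
  then show ?thesis by (simp add: power_mult_distrib power_add algebra_simps power2_eq_square)
qed

lemma block_slope_bound_geometric:
  "block_slope_bound x (n * period + 1) \<le> (real B^2 * golden^(N+2) * mu^B)^n * block_slope_bound x 1"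
proof (induction n)
  case (Suc n)
  let ?r = "real B^2 * golden^(N+2) * mu^B"
  have "block_slope_bound x (Suc n * period + 1) \<le> ?r * block_slope_bound x (n * period + 1)"
    by (rule block_slope_bound_period)
  also have "\<dots> \<le> ?r * (?r^n * block_slope_bound x 1)"
    using Suc mu_pos golden_gt1 by (intro mult_left_mono) auto
  finally show ?case by (simp add: mult.assoc)
qed simp

lemma block_slope_bound_le:
  assumes "m \<ge> 1"
  shows "block_slope_bound x m
     \<le> ((real B * golden)^2)^period * (real B^2 * golden^(N+2) * mu^B)^((m - 1) div period)
          * block_slope_bound x 1"
proof -
  let ?C = "(real B * golden)^2" and ?n = "(m - 1) div period" and ?r = "(m - 1) mod period"
  have inner: "block_slope_bound x (m' + r) \<le> ?C^r * block_slope_bound x m'" if "m' \<ge> 1" for m' r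
  proof (induction r)
    case (Suc r)
    have "block_slope_bound x (Suc (m' + r)) \<le> ?C * block_slope_bound x (m' + r)"
      using block_slope_bound_Suc_le[of "m' + r"] that by simp
    also have "\<dots> \<le> ?C * (?C^r * block_slope_bound x m')"
      using Suc one_le_B_golden_sq by (intro mult_left_mono) auto
    finally show ?case by (simp add: mult.assoc)
  qed simp
  have "m = (?n * period + 1) + ?r" using assms div_mult_mod_eq[of "m - 1" period] by linarith
  then have "block_slope_bound x m \<le> ?C^?r * block_slope_bound x (?n * period + 1)"
    using inner[of "?n * period + 1" ?r] by simp
  also have "\<dots> \<le> ?C^period * block_slope_bound x (?n * period + 1)"
    using one_le_B_golden_sq block_slope_bound_nonneg by (intro mult_right_mono power_increasing) auto
  also have "\<dots> \<le> ?C^period * ((real B^2 * golden^(N+2) * mu^B)^?n * block_slope_bound x 1)"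
    using block_slope_bound_geometric[of ?n] one_le_B_golden_sq by (intro mult_left_mono) auto
  finally show ?thesis by (simp add: mult.assoc)
qed

lemma slope_bound_le:
  assumes m: "m \<ge> 1" and k: "block_end x m \<le> k" "k < block_end x (Suc m)"
  shows "slope_bound x k
     \<le> ((real B * golden)^2)^Suc period * (block_slope_bound x 1 + 1)
         * (real B^2 * golden^(N+2) * mu^B)^((m - 1) div period)"
proof -
  let ?C = "(real B * golden)^2" and ?r = "(real B^2 * golden^(N+2) * mu^B)^((m - 1) div period)"
  define j where "j = k - block_end x m"
  have kj: "k = block_end x m + j" "j \<le> cf_quot x (Suc m)"
    using k block_end_Suc[OF x m] by (auto simp: j_def)
  have "real (cf_quot x (Suc m)) * golden \<le> real B * golden"
    using cf_quot_period[of m] B1 golden_gt1 by auto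
  then have "(real (cf_quot x (Suc m)) * golden)^2 \<le> ?C" using golden_gt1 by (intro power_mono) auto
  then have "slope_bound x k \<le> block_slope_bound x m * ?C"
    using slope_bound_within_block[OF x m kj(2)] block_slope_bound_nonneg[of x m] unfolding kj(1)
    by (meson mult_left_mono order_trans)
  also have "\<dots> \<le> (?C^period * ?r * (block_slope_bound x 1 + 1)) * ?C"
  proof (intro mult_right_mono)
    have "0 \<le> ?C^period * ?r" using mu_pos golden_gt1 by simp
    then have "?C^period * ?r * block_slope_bound x 1 \<le> ?C^period * ?r * (block_slope_bound x 1 + 1)"
      by (intro mult_left_mono) auto
    then show "block_slope_bound x m \<le> ?C^period * ?r * (block_slope_bound x 1 + 1)"
      using block_slope_bound_le[OF m] by linarith
  qed simp
  finally show ?thesis by (simp add: algebra_simps)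
qed

lemma slope_bound_tendsto_zero: "slope_bound x \<longlonglongrightarrow> 0"
proof (rule LIMSEQ_I)
  fix e :: real assume e: "e > 0"
  let ?C = "((real B * golden)^2)^Suc period * (block_slope_bound x 1 + 1)"
    and ?r = "real B^2 * golden^(N+2) * mu^B"
  have "0 < (real B * golden)^2" using one_le_B_golden_sq by linarith
  then have "0 < ((real B * golden)^2)^Suc period" by (rule zero_less_power)
  then have C: "?C > 0" using block_slope_bound_nonneg[of x 1] by simp
  have r: "0 \<le> ?r" "?r < 1" using mu_pos golden_gt1 contraction by auto
  obtain n0 where n0: "?r^n0 < e / ?C" using real_arch_pow_inv[of "e / ?C" ?r] e C r by auto
  show "\<exists>K. \<forall>k\<ge>K. norm (slope_bound x k - 0) < e"
  proof (intro exI allI impI)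
    fix k assume k: "block_end x (n0 * period + 1) \<le> k"
    obtain m' where m': "m' \<ge> 1" "block_end x (m' - 1) \<le> k" "k < block_end x m'"
      using block_containing[OF x] by blast
    have "n0 * period + 1 < m'" using block_index_gt[OF x k m'(3)] .
    then have "n0 * period \<le> m' - 1 - 1" by simp
    have "n0 = n0 * period div period" by (rule nonzero_mult_div_cancel_right[symmetric]) simp
    also have "\<dots> \<le> (m' - 1 - 1) div period" by (rule div_le_mono) fact
    finally have m: "m' - 1 \<ge> 1" "n0 \<le> (m' - 1 - 1) div period"
      using \<open>n0 * period + 1 < m'\<close> by auto
    have "slope_bound x k \<le> ?C * ?r^((m' - 1 - 1) div period)"
      using slope_bound_le[of "m' - 1" k] m m' by simp
    also have "\<dots> \<le> ?C * ?r^n0" using m r C by (intro mult_left_mono power_decreasing) auto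
    also have "\<dots> < e" using n0 C by (simp add: field_simps)
    finally show "norm (slope_bound x k - 0) < e" using slope_bound_nonneg[of x k] by simp
  qed
qed

end

subsection \<open>Purely periodic continued fractions\<close>

fun cf_compose :: "nat list \<Rightarrow> real \<Rightarrow> real" where
  "cf_compose [] u = u"
| "cf_compose (c # cs) u = 1 / (real c + cf_compose cs u)"

lemma cf_compose_in_unit: "(\<forall>c\<in>set cs. c \<ge> 1) \<Longrightarrow> 0 < u \<Longrightarrow> u < 1 \<Longrightarrow> 0 < cf_compose cs u \<and> cf_compose cs u < 1"
proof (induction cs)
  case Nil then show ?case by simp
next
  case (Cons c cs)
  hence t: "0 < cf_compose cs u" "cf_compose cs u < 1" "real c \<ge> 1" by auto
  hence "real c + cf_compose cs u > 1" by simp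
  thus ?case by (simp add: field_simps)
qed

lemma cf_compose_in_closed_unit: "(\<forall>c\<in>set cs. c \<ge> 1) \<Longrightarrow> 0 \<le> u \<Longrightarrow> u \<le> 1 \<Longrightarrow> 0 \<le> cf_compose cs u \<and> cf_compose cs u \<le> 1"
proof (induction cs)
  case Nil then show ?case by simp
next
  case (Cons c cs)
  hence t: "0 \<le> cf_compose cs u" "cf_compose cs u \<le> 1" "real c \<ge> 1" by auto
  hence "real c + cf_compose cs u \<ge> 1" by simp
  thus ?case by (simp add: field_simps)
qed

lemma continuous_on_cf_compose: "(\<forall>c\<in>set cs. c \<ge> 1) \<Longrightarrow> continuous_on {0..1} (cf_compose cs)"
proof (induction cs)
  case Nil
  have "cf_compose [] = (\<lambda>u. u)" by auto
  then show ?case by (simp add: continuous_on_id)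
next
  case (Cons c cs)
  have e: "cf_compose (c # cs) = (\<lambda>u. 1 / (real c + cf_compose cs u))" by auto
  have "\<forall>u\<in>{0..1}. 0 \<le> cf_compose cs u" using cf_compose_in_closed_unit[of cs] Cons.prems by auto
  moreover have "real c \<ge> 1" using Cons.prems by simp
  ultimately have "\<forall>u\<in>{0..1}. real c + cf_compose cs u \<noteq> 0" by fastforce
  moreover have "continuous_on {0..1} (\<lambda>u. real c + cf_compose cs u)"
    using Cons by (intro continuous_intros) auto
  moreover have ih: "continuous_on {0..1} (cf_compose cs)" using Cons by auto
  ultimately show ?case unfolding e by (intro continuous_on_divide continuous_intros) auto
qed

lemma cf_compose_fixed_point:
  assumes "\<forall>c\<in>set cs. c \<ge> 1" "B \<ge> 2"
  shows "\<exists>y. 0 < y \<and> y < 1 \<and> cf_compose (B # cs) y = y"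
proof -
  let ?f = "\<lambda>u. u - cf_compose (B # cs) u"
  have all: "\<forall>c\<in>set (B # cs). c \<ge> 1" using assms by auto
  have c: "continuous_on {0..1} ?f" using continuous_on_cf_compose[OF all] by (intro continuous_intros) auto
  have t0: "0 \<le> cf_compose cs 0" "0 \<le> cf_compose cs 1" using cf_compose_in_closed_unit[OF assms(1)] by auto
  have f0: "?f 0 < 0" using t0 assms(2) by simp
  have "real B + cf_compose cs 1 \<ge> 2" using t0 assms(2) by simp
  hence "cf_compose (B # cs) 1 \<le> 1/2" by (simp add: field_simps)
  hence f1: "?f 1 > 0" by simp
  obtain y where y: "0 \<le> y" "y \<le> 1" "?f y = 0" using IVT'[of ?f 0 0 1] f0 f1 c by auto
  have "y \<noteq> 0" using y f0 by auto
  moreover have "y \<noteq> 1" using y f1 by auto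
  ultimately show ?thesis using y by (intro exI[of _ y]) auto
qed

lemma gauss_map_inverse_branch: assumes "0 < u" "u < 1" "c \<ge> 1" shows "gauss_map (1 / (real c + u)) = u"
proof -
  have p: "real c + u > 0" using assms by simp
  have "\<lfloor>real c + u\<rfloor> = int c" using assms by (simp add: floor_eq_iff)
  thus ?thesis using p by (simp add: gauss_map_def)
qed

lemma funpow_gauss_map_cf_compose:
  assumes all: "\<forall>c\<in>set L. c \<ge> 1" and y: "0 < y" "y < 1" "cf_compose L y = y" and i: "i \<le> length L"
  shows "(gauss_map ^^ i) y = cf_compose (drop i L) y"
  using i
proof (induction i)
  case 0 then show ?case using y by simp
next
  case (Suc i)
  have il: "i < length L" using Suc by simp
  have d: "drop i L = L ! i # drop (Suc i) L" using Cons_nth_drop_Suc[OF il] by simp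
  have t: "0 < cf_compose (drop (Suc i) L) y \<and> cf_compose (drop (Suc i) L) y < 1"
    using cf_compose_in_unit[of "drop (Suc i) L" y] all y by (meson in_set_dropD)
  have ci: "L ! i \<ge> 1" using all il by auto
  have "(gauss_map ^^ Suc i) y = gauss_map (cf_compose (drop i L) y)" using Suc by simp
  also have "\<dots> = cf_compose (drop (Suc i) L) y" unfolding d using gauss_map_inverse_branch[of _ "L ! i"] t ci by simp
  finally show ?case .
qed

lemma funpow_gauss_map_periodic:
  assumes all: "\<forall>c\<in>set L. c \<ge> 1" and y: "0 < y" "y < 1" "cf_compose L y = y" and L: "L \<noteq> []"
  shows "(gauss_map ^^ i) y = cf_compose (drop (i mod length L) L) y"
proof -
  let ?P = "length L"
  have gP: "(gauss_map ^^ ?P) y = y" using funpow_gauss_map_cf_compose[OF all y, of ?P] by simp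
  have per: "(gauss_map ^^ (j + n * ?P)) y = (gauss_map ^^ j) y" for j n
  proof (induction n)
    case 0 then show ?case by simp
  next
    case (Suc n)
    have e: "j + Suc n * ?P = (j + n * ?P) + ?P" by simp
    have "(gauss_map ^^ (j + Suc n * ?P)) y = (gauss_map ^^ (j + n * ?P)) ((gauss_map ^^ ?P) y)"
      unfolding e by (simp only: funpow_add o_apply)
    then show ?case using Suc gP by simp
  qed
  have "i = i mod ?P + (i div ?P) * ?P" by simp
  hence "(gauss_map ^^ i) y = (gauss_map ^^ (i mod ?P)) y" using per by metis
  also have "\<dots> = cf_compose (drop (i mod ?P) L) y" using L by (intro funpow_gauss_map_cf_compose[OF all y]) simp
  finally show ?thesis .
qed

lemma cf_quot_periodic:
  assumes all: "\<forall>c\<in>set L. c \<ge> 1" and y: "0 < y" "y < 1" "cf_compose L y = y" and L: "L \<noteq> []"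
  shows "cf_quot y (Suc i) = L ! (i mod length L)"
proof -
  let ?j = "i mod length L"
  have jl: "?j < length L" using L by simp
  have d: "drop ?j L = L ! ?j # drop (Suc ?j) L" using Cons_nth_drop_Suc[OF jl] by simp
  have t: "0 < cf_compose (drop (Suc ?j) L) y \<and> cf_compose (drop (Suc ?j) L) y < 1"
    using cf_compose_in_unit[of "drop (Suc ?j) L" y] all y by (meson in_set_dropD)
  have ci: "L ! ?j \<ge> 1" using all jl by auto
  have g: "(gauss_map ^^ i) y = 1 / (real (L ! ?j) + cf_compose (drop (Suc ?j) L) y)"
    using funpow_gauss_map_periodic[OF all y L, of i] d by simp
  have p: "real (L ! ?j) + cf_compose (drop (Suc ?j) L) y > 0" using t by simp
  have "\<lfloor>real (L ! ?j) + cf_compose (drop (Suc ?j) L) y\<rfloor> = int (L ! ?j)" using t by (simp add: floor_eq_iff)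
  thus ?thesis using g p by (simp add: cf_quot_def)
qed

lemma gauss_map_rational_den_less:
  assumes u: "0 < u" "u < 1" "u = real a / real d" "d > 0"
  shows "\<exists>a' d'. 0 < d' \<and> d' < d \<and> gauss_map u = real a' / real d'"
proof -
  have a0: "a > 0" using u by (cases a) auto
  have ad: "a < d"
  proof (rule ccontr)
    assume "\<not> a < d" hence "real d \<le> real a" by simp
    hence "u \<ge> 1" using u by (simp add: field_simps)
    thus False using u by simp
  qed
  have inv: "1 / u = real d / real a" using u a0 by simp
  have fl: "\<lfloor>real d / real a\<rfloor> = int (d div a)" by (rule floor_divide_of_nat_eq)
  have dd: "real d = real (d div a) * real a + real (d mod a)"
    by (metis of_nat_add of_nat_mult div_mult_mod_eq)
  have "gauss_map u = real d / real a - real (d div a)" using inv fl by (simp add: gauss_map_def)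
  also have "\<dots> = real (d mod a) / real a" using a0 dd by (simp add: field_simps)
  finally show ?thesis using a0 ad by blast
qed

lemma cf_compose_fixed_point_irrational:
  assumes all: "\<forall>c\<in>set L. c \<ge> 1" and y: "0 < y" "y < 1" "cf_compose L y = y" and L: "L \<noteq> []"
  shows "y \<notin> \<rat>"
proof
  assume "y \<in> \<rat>"
  then obtain a0 d0 where r: "d0 \<noteq> 0" "\<bar>y\<bar> = real a0 / real d0" by (blast elim: Rats_abs_nat_div_natE)
  let ?R = "\<lambda>d. 0 < d \<and> (\<exists>a. y = real a / real d)"
  have exists_bound: "?R d0" using r y by auto
  define D where "D = (LEAST d. ?R d)"
  have RD: "?R D" unfolding D_def by (rule LeastI[of ?R, OF exists_bound])
  have iter01: "0 < (gauss_map ^^ i) y \<and> (gauss_map ^^ i) y < 1" for i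
  proof -
    have "\<forall>c\<in>set (drop (i mod length L) L). 1 \<le> c" using all by (meson in_set_dropD)
    thus ?thesis using funpow_gauss_map_periodic[OF all y L, of i] cf_compose_in_unit[of "drop (i mod length L) L" y] y by simp
  qed
  have claim: "i \<le> length L \<Longrightarrow> \<exists>a d. 0 < d \<and> d + i \<le> D \<and> (gauss_map ^^ i) y = real a / real d" for i
  proof (induction i)
    case 0 then show ?case using RD by auto
  next
    case (Suc i)
    then obtain a d where ad: "0 < d" "d + i \<le> D" "(gauss_map ^^ i) y = real a / real d" by auto
    obtain a' d' where "0 < d'" "d' < d" "gauss_map ((gauss_map ^^ i) y) = real a' / real d'"
      using gauss_map_rational_den_less[of "(gauss_map ^^ i) y" a d] iter01[of i] ad by auto
    thus ?case using ad by (intro exI[of _ a'] exI[of _ d']) auto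
  qed
  obtain a d where ad: "0 < d" "d + length L \<le> D" "(gauss_map ^^ length L) y = real a / real d"
    using claim[of "length L"] by auto
  have "(gauss_map ^^ length L) y = y" using funpow_gauss_map_cf_compose[OF all y, of "length L"] by simp
  hence "?R d" using ad by auto
  hence "D \<le> d" unfolding D_def by (rule Least_le)
  moreover have "length L > 0" using L by simp
  ultimately show False using ad by linarith
qed

lemma tendsto_div_of_periodic_increment:
  fixes f :: "nat \<Rightarrow> real"
  assumes p: "p > 0" and f: "\<And>t. f (t + p) = f t + W"
  shows "(\<lambda>t. f t / real t) \<longlonglongrightarrow> W / real p"
proof -
  define g where "g t = f t - W / real p * real t" for t
  have "W / real p * real p = W" using p by simp
  then have g_period: "g (t + p) = g t" for t by (simp add: g_def f distrib_left)
  have g_shift: "g (r + q * p) = g r" for r q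
  proof (induction q)
    case (Suc q)
    have "g (r + Suc q * p) = g ((r + q * p) + p)" by (simp add: algebra_simps)
    also have "\<dots> = g r" using g_period Suc by simp
    finally show ?case .
  qed simp
  have g_mod: "g t = g (t mod p)" for t using g_shift[of "t mod p" "t div p"] by simp
  define K where "K = (\<Sum>r<p. \<bar>g r\<bar>)"
  have g_bound: "\<bar>g t\<bar> \<le> K" for t
    unfolding g_mod[of t] K_def using p by (intro member_le_sum) auto
  have "(\<lambda>t. g t / real t) \<longlonglongrightarrow> 0"
  proof (rule real_tendsto_sandwich[of "\<lambda>t. - K / real t" _ _ "\<lambda>t. K / real t"])
    have lower: "- K \<le> g t" and upper: "g t \<le> K" for t
      using abs_le_D1[OF g_bound, of t] abs_le_D2[OF g_bound, of t] by linarith+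
    show "\<forall>\<^sub>F t in sequentially. - K / real t \<le> g t / real t"
      by (intro always_eventually allI divide_right_mono[OF lower]) simp
    show "\<forall>\<^sub>F t in sequentially. g t / real t \<le> K / real t"
      by (intro always_eventually allI divide_right_mono[OF upper]) simp
    show "(\<lambda>t. - K / real t) \<longlonglongrightarrow> 0" by (rule lim_const_over_n)
    show "(\<lambda>t. K / real t) \<longlonglongrightarrow> 0" by (rule lim_const_over_n)
  qed
  then have "(\<lambda>t. W / real p + g t / real t) \<longlonglongrightarrow> W / real p"
    using tendsto_add[OF tendsto_const] by fastforce
  moreover have "\<forall>\<^sub>F t in sequentially. W / real p + g t / real t = f t / real t"
  proof (rule eventually_sequentiallyI[of 1])
    fix t :: nat assume "1 \<le> t"
    then show "W / real p + g t / real t = f t / real t" by (simp add: g_def field_simps)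
  qed
  ultimately show ?thesis by (rule Lim_transform_eventually)
qed

lemma S_phi_periodic_first_period:
  assumes per: "\<And>i. cf_quot y (Suc i) = (if i mod (2*N+2) = 0 then B else 1)" and i: "i \<le> N"
  shows "S_phi (2 * i + 2) y = real B + 3 * real i + 2"
  using i
proof (induction i)
  case 0
  have "cf_quot y 1 = B" "cf_quot y 2 = 1" using per[of 0] per[of 1] by (simp_all add: numeral_2_eq_2)
  then show ?case by (simp add: S_phi_def numeral_2_eq_2)
next
  case (Suc i)
  have "cf_quot y (Suc (2 * i + 2)) = 1" "cf_quot y (Suc (Suc (2 * i + 2))) = 1"
    using per[of "2 * i + 2"] per[of "Suc (2 * i + 2)"] Suc.prems by simp_all
  moreover have "2 * Suc i + 2 = Suc (Suc (2 * i + 2))" by simp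
  ultimately show ?case using Suc by (simp only: S_phi_Suc) simp
qed

lemma S_phi_add_period:
  assumes per: "\<And>i. cf_quot y (Suc i) = (if i mod (2*N+2) = 0 then B else 1)"
  shows "S_phi (n + (2*N+2)) y = S_phi n y + (real B + 3 * real N + 2)"
proof (induction n)
  case 0
  show ?case using S_phi_periodic_first_period[OF per, of N] by (simp add: S_phi_def add.commute)
next
  case (Suc n)
  have cf: "cf_quot y (Suc (n + (2*N+2))) = cf_quot y (Suc n)" unfolding per mod_add_self2 ..
  have ev: "even (Suc (n + (2*N+2))) = even (Suc n)" by simp
  have "S_phi (Suc n + (2*N+2)) y = S_phi (Suc (n + (2*N+2))) y" by simp
  also have "\<dots> = S_phi (Suc n) y + (real B + 3 * real N + 2)"
    unfolding S_phi_Suc cf ev Suc.IH by simp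
  finally show ?case .
qed

lemma S_phi_periodic_tendsto:
  assumes per: "\<And>i. cf_quot y (Suc i) = (if i mod (2*N+2) = 0 then B else 1)"
  shows "(\<lambda>t. S_phi (2 * t) y / real t) \<longlonglongrightarrow> (real B + 3 * real N + 2) / real (N + 1)"
proof -
  have "S_phi (2 * (t + (N + 1))) y = S_phi (2 * t) y + (real B + 3 * real N + 2)" for t
    using S_phi_add_period[OF per, of "2 * t"] by (simp add: algebra_simps)
  then show ?thesis
    using tendsto_div_of_periodic_increment[of "N + 1" "\<lambda>t. S_phi (2 * t) y" "real B + 3 * real N + 2"]
    by simp
qed

lemma periodic_cf_exists:
  assumes B: "B \<ge> 2"
  shows "\<exists>y. unit_irrat y \<and> (\<forall>i. cf_quot y (Suc i) = (if i mod (2*N+2) = 0 then B else 1))"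
proof -
  define L where "L = B # replicate (2*N+1) (1::nat)"
  have all: "\<forall>c\<in>set L. c \<ge> 1" and L: "L \<noteq> []" "length L = 2*N+2" using B by (auto simp: L_def)
  obtain y where y: "0 < y" "y < 1" "cf_compose L y = y"
    using cf_compose_fixed_point[of "replicate (2*N+1) 1" B] B by (auto simp: L_def)
  have "unit_irrat y" using cf_compose_fixed_point_irrational[OF all y L(1)] y by (simp add: unit_irrat_def)
  moreover have "L ! r = (if r = 0 then B else 1)" if "r < 2*N+2" for r
    using that by (cases r) (auto simp: L_def nth_Cons')
  then have "cf_quot y (Suc i) = (if i mod (2*N+2) = 0 then B else 1)" for i
    using cf_quot_periodic[OF all y L(1), of i] L(2) by simp
  ultimately show ?thesis by blast
qed

lemma power_three_halves_gt:
  assumes "j \<ge> 50" shows "16 * real j ^ 4 < (3/2::real) ^ j"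
  using assms
proof (induction j rule: dec_induct)
  case base then show ?case by (simp add: power_divide less_divide_eq)
next
  case (step j)
  have "real j + 1 \<le> 11/10 * real j" using step by simp
  then have "(real j + 1)^4 \<le> (11/10 * real j)^4" by (intro power_mono) auto
  also have "\<dots> = (11/10)^4 * real j ^ 4" by (rule power_mult_distrib)
  also have "\<dots> \<le> 3/2 * real j ^ 4" by (intro mult_right_mono) (simp_all add: power_divide)
  finally have "16 * (real j + 1)^4 \<le> 3/2 * (16 * real j ^ 4)" by simp
  also have "\<dots> < 3/2 * (3/2) ^ j" using step by simp
  finally show ?case by (simp add: add.commute)
qed

text \<open>The block \<open>B = j\<^sup>2 + j + 2\<close> beats the \<open>N + 2 = j\<^sup>2 + 2\<close> factors \<open>\<phi>\<close> of one period
  by the factor \<open>\<mu>\<^sup>j\<close>, which beats the polynomial \<open>B\<^sup>2\<close>.\<close>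

lemma periodic_contraction:
  assumes j: "j \<ge> 50"
  shows "real (j^2 + j + 2)^2 * golden^(j^2 + 2) * mu^(j^2 + j + 2) < 1"
proof -
  let ?B = "real (j^2 + j + 2)"
  have gm: "golden^n * mu^n = 1" for n by (simp add: power_mult_distrib[symmetric] mu_golden[unfolded mult.commute[of mu]])
  have "?B^2 * golden^(j^2 + 2) * mu^(j^2 + j + 2) = ?B^2 * mu^j * (golden^(j^2 + 2) * mu^(j^2 + 2))"
    by (simp add: power_add algebra_simps)
  also have "\<dots> = ?B^2 * mu^j" by (simp only: gm mult_1_right)
  also have "\<dots> < golden^j * mu^j"
  proof (intro mult_strict_right_mono)
    have "1 \<le> real j" "real j \<le> real j^2" "?B = real j^2 + real j + 2"
      using j by (simp_all add: power2_eq_square)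
    then have "?B \<le> 4 * real j^2" by linarith
    then have "?B^2 \<le> (4 * real j^2)^2" by (intro power_mono) auto
    also have "\<dots> = 16 * real j^4" by (simp add: power_mult_distrib power_mult[symmetric])
    also have "\<dots> < (3/2)^j" by (rule power_three_halves_gt[OF j])
    also have "\<dots> \<le> golden^j" using golden_ge_three_halves by (intro power_mono) auto
    finally show "?B^2 < golden^j" .
  qed (use mu_pos in simp)
  also have "\<dots> = 1" by (rule gm)
  finally show ?thesis .
qed

lemma periodic_S_phi_limit_less:
  assumes d: "\<delta> > 0" and j: "\<delta> * real j \<ge> 1"
  shows "(real (j^2 + j + 2) + 3 * real (j^2) + 2) / real (j^2 + 1) < 4 + \<delta>"
proof -
  have "real j > 0" using d j by (cases "j = 0") auto
  then have "real j \<le> \<delta> * real j * real j" using j by (simp add: mult_le_cancel_right1)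
  then have "real j < \<delta> * (real j^2 + 1)" using d by (simp add: power2_eq_square algebra_simps)
  then show ?thesis by (simp add: divide_less_eq add_pos_nonneg algebra_simps)
qed

theorem DTU_golden_deriv_zero_witness:
  assumes d: "\<delta> > 0"
  shows "\<exists>y::real. y \<in> {0<..<1} \<and> y \<notin> \<rat> \<and>
              (\<exists>L. (\<lambda>t. S_phi (2 * t) y / real t) \<longlonglongrightarrow> L \<and> L < 4 + \<delta>) \<and>
              (DTU (1 / golden) has_real_derivative 0) (at y)"
proof -
  define j where "j = max 50 (nat \<lceil>1 / \<delta>\<rceil>)"
  have "1 / \<delta> \<le> real j" using real_nat_ceiling_ge[of "1 / \<delta>"] unfolding j_def of_nat_max by linarith
  then have j: "j \<ge> 50" "\<delta> * real j \<ge> 1" using d by (auto simp: j_def field_simps)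
  obtain y where y: "unit_irrat y"
    and per: "\<And>i. cf_quot y (Suc i) = (if i mod (2 * j^2 + 2) = 0 then j^2 + j + 2 else 1)"
    using periodic_cf_exists[of "j^2 + j + 2" "j^2"] by auto
  interpret golden_periodic_cf y "j^2" "j^2 + j + 2"
    using y per periodic_contraction[OF j(1)] by unfold_locales simp_all
  have "(DTU (1 / golden) has_real_derivative 0) (at y)"
    by (rule DTU_golden_deriv_zero[OF y slope_bound_tendsto_zero])
  moreover have "(\<lambda>t. S_phi (2 * t) y / real t)
      \<longlonglongrightarrow> (real (j^2 + j + 2) + 3 * real (j^2) + 2) / real (j^2 + 1)"
    by (rule S_phi_periodic_tendsto[OF per])
  ultimately show ?thesis
    using y periodic_S_phi_limit_less[OF d j(2)] by (auto simp: unit_irrat_def)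
qed

theorem theorem1:
  shows "(\<forall>x::real. x \<in> {0<..<1} \<and> x \<notin> \<rat> \<and>
            limsup (\<lambda>t. ereal (S_phi (2 * t) x / real t)) < 4 \<longrightarrow>
            filterlim (\<lambda>h. (DTU (1 / golden) (x + h) - DTU (1 / golden) x) / h) at_top (at 0))
       \<and> (\<forall>\<delta>::real. \<delta> > 0 \<longrightarrow>
            (\<exists>y::real. y \<in> {0<..<1} \<and> y \<notin> \<rat> \<and>
              (\<exists>L. (\<lambda>t. S_phi (2 * t) y / real t) \<longlonglongrightarrow> L \<and> L < 4 + \<delta>) \<and>
              (DTU (1 / golden) has_real_derivative 0) (at y)))"
  using DTU_golden_deriv_infinite DTU_golden_deriv_zero_witness by (auto simp: unit_irrat_def)

end
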